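(* Let $(U,d)$ be an asymmetric pseudometric space with $|U|=n$, $k$ an integer with $2\le k\le n$, and $R^*>0$ the optimal AMMD value. Then the algorithm $\mathrm{BAC}(U,d,k)$ (described in the context) is a $\frac{1}{6k}$-approximation for AMMD: it returns a set $S\subseteq U$ with $|S|=k$ and $\operatorname{div}(S)\ge \frac{R^*}{6k}$.
   Context: An asymmetric pseudometric space $(U,d)$ is a finite set $U$ with $d:U\times U\to\mathbb{R}_{\ge 0}$ such that $d(u,u)=0$ and $d(u,v)\le d(u,w)+d(w,v)$ for all $u,v,w\in U$ ($d$ need not be symmetric). For $S\subseteq U$, $\operatorname{div}(S)=\min_{u,v\in S,\,u\ne v} d(u,v)$; AMMD asks for $O\subseteq U$, $|O|=k$, maximizing $\operatorname{div}(O)$, with maximum value $R^*$. $d_{\min}(u,v)=\min\{d(u,v),d(v,u)\}$, $d_{\max}(u,v)=\max\{d(u,v),d(v,u)\}$. Cluster$(U,d,R)$ (for $R>0$): initially all points are unmarked; while an unmarked point exists, choose any unmarked point $c$, let $A=\{v \text{ unmarked}: d_{\max}(c,v)<R\}$, mark all points of $A$, and add $c$ to the output set $U'$. Return $U'$. Extract$(W,d,\sigma,k)$ (for $W\subseteq U$, $\sigma>0$): build the digraph $G$ on $W$ with an arc $ij$ ($i\ne j$) iff $d(i,j)<\sigma$. If $G$ contains a directed cycle, let $C$ be a chordless directed cycle of $G$ (no arcs of $G$ between non-consecutive vertices of the cycle). Let $G_c$ be the condensation of $G$ (vertices are strongly connected components), $M$ a maximum antichain of $G_c$ (a maximum set of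 pairwise mutually unreachable vertices), and $L$ a path in $G_c$ with $2k-1$ arcs that is a shortest path between its endpoints, or, if none exists, a longest path among shortest paths found in $G_c$; $|C|,|L|$ denote numbers of vertices. If $C$ exists, $|C|\ge 2|M|-1$ and $|C|\ge|L|$, let $I$ be the vertices of $C=(v_1,\dots,v_\ell)$ with odd indices; else if $2|M|-1\ge|L|$, let $I$ consist of one point of $G$ from each component in $M$; else let $I$ consist of one point of $G$ from each component on $L$ with odd index. If $|I|\ge k$, output $k$ points greedily selected from $I$ (repeatedly adding a point of $I$ maximizing the $d_{\min}$-distance to the already selected points); otherwise return nothing. BAC$(U,d,k)$: for every $R\in\{d(i,j)>0: i,j\in U, i\ne j\}$, compute $U'=$ Cluster$(U,d,R)$ and call Extract$(U',d,R/(2k),k)$; return the set with the largest $\operatorname{div}$ among all sets returned by Extract. *)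

theory Defs
  imports Complex_Main
begin

definition asym_pseudometric :: "'a set \<Rightarrow> ('a \<Rightarrow> 'a \<Rightarrow> real) \<Rightarrow> bool" where
  "asym_pseudometric U d \<longleftrightarrow> finite U \<and>
     (\<forall>u\<in>U. \<forall>v\<in>U. 0 \<le> d u v) \<and>
     (\<forall>u\<in>U. d u u = 0) \<and>
     (\<forall>u\<in>U. \<forall>v\<in>U. \<forall>w\<in>U. d u v \<le> d u w + d w v)"

definition dmin :: "('a \<Rightarrow> 'a \<Rightarrow> real) \<Rightarrow> 'a \<Rightarrow> 'a \<Rightarrow> real" where
  "dmin d u v = min (d u v) (d v u)"

definition dmax :: "('a \<Rightarrow> 'a \<Rightarrow> real) \<Rightarrow> 'a \<Rightarrow> 'a \<Rightarrow> real" where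
  "dmax d u v = max (d u v) (d v u)"

definition diver :: "('a \<Rightarrow> 'a \<Rightarrow> real) \<Rightarrow> 'a set \<Rightarrow> real" where
  "diver d S = Min {d u v | u v. u \<in> S \<and> v \<in> S \<and> u \<noteq> v}"

definition opt_div :: "'a set \<Rightarrow> ('a \<Rightarrow> 'a \<Rightarrow> real) \<Rightarrow> nat \<Rightarrow> real" where
  "opt_div U d k = Max {diver d T | T. T \<subseteq> U \<and> card T = k}"

section \<open>Cluster (nondeterministic: any unmarked centre may be chosen)\<close>

inductive cluster_run :: "('a \<Rightarrow> 'a \<Rightarrow> real) \<Rightarrow> real \<Rightarrow> 'a set \<Rightarrow> 'a set \<Rightarrow> 'a set \<Rightarrow> bool"
  for d R where
  stop: "cluster_run d R {} Out Out"
| step: "c \<in> Unm \<Longrightarrow>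
         cluster_run d R (Unm - {v \<in> Unm. dmax d c v < R}) (insert c Out) F \<Longrightarrow>
         cluster_run d R Unm Out F"

definition cluster_result :: "('a \<Rightarrow> 'a \<Rightarrow> real) \<Rightarrow> 'a set \<Rightarrow> real \<Rightarrow> 'a set \<Rightarrow> bool" where
  "cluster_result d U R U' \<longleftrightarrow> cluster_run d R U {} U'"

definition garc :: "('a \<Rightarrow> 'a \<Rightarrow> real) \<Rightarrow> real \<Rightarrow> 'a set \<Rightarrow> 'a \<Rightarrow> 'a \<Rightarrow> bool" where
  "garc d \<sigma> W i j \<longleftrightarrow> i \<in> W \<and> j \<in> W \<and> i \<noteq> j \<and> d i j < \<sigma>"

definition dicycle :: "('a \<Rightarrow> 'a \<Rightarrow> real) \<Rightarrow> real \<Rightarrow> 'a set \<Rightarrow> 'a list \<Rightarrow> bool" where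
  "dicycle d \<sigma> W cs \<longleftrightarrow> cs \<noteq> [] \<and> distinct cs \<and> set cs \<subseteq> W \<and>
     (\<forall>i < length cs. garc d \<sigma> W (cs ! i) (cs ! ((i + 1) mod length cs)))"

definition chordless_dicycle :: "('a \<Rightarrow> 'a \<Rightarrow> real) \<Rightarrow> real \<Rightarrow> 'a set \<Rightarrow> 'a list \<Rightarrow> bool" where
  "chordless_dicycle d \<sigma> W cs \<longleftrightarrow> dicycle d \<sigma> W cs \<and>
     (\<forall>i < length cs. \<forall>j < length cs.
        j \<noteq> i \<and> j \<noteq> (i + 1) mod length cs \<and> i \<noteq> (j + 1) mod length cs
        \<longrightarrow> \<not> garc d \<sigma> W (cs ! i) (cs ! j))"

definition has_dicycle :: "('a \<Rightarrow> 'a \<Rightarrow> real) \<Rightarrow> real \<Rightarrow> 'a set \<Rightarrow> bool" where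
  "has_dicycle d \<sigma> W \<longleftrightarrow> (\<exists>cs. dicycle d \<sigma> W cs)"

definition greach :: "('a \<Rightarrow> 'a \<Rightarrow> real) \<Rightarrow> real \<Rightarrow> 'a set \<Rightarrow> 'a \<Rightarrow> 'a \<Rightarrow> bool" where
  "greach d \<sigma> W u v \<longleftrightarrow> (u, v) \<in> {(i, j). garc d \<sigma> W i j}\<^sup>*"

text \<open>Strongly connected components = vertices of the condensation G_c.\<close>
definition gscc :: "('a \<Rightarrow> 'a \<Rightarrow> real) \<Rightarrow> real \<Rightarrow> 'a set \<Rightarrow> 'a \<Rightarrow> 'a set" where
  "gscc d \<sigma> W u = {v \<in> W. greach d \<sigma> W u v \<and> greach d \<sigma> W v u}"

definition gsccs :: "('a \<Rightarrow> 'a \<Rightarrow> real) \<Rightarrow> real \<Rightarrow> 'a set \<Rightarrow> 'a set set" where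
  "gsccs d \<sigma> W = gscc d \<sigma> W ` W"

definition creach :: "('a \<Rightarrow> 'a \<Rightarrow> real) \<Rightarrow> real \<Rightarrow> 'a set \<Rightarrow> 'a set \<Rightarrow> 'a set \<Rightarrow> bool" where
  "creach d \<sigma> W X Y \<longleftrightarrow> (\<exists>x\<in>X. \<exists>y\<in>Y. greach d \<sigma> W x y)"

definition carc :: "('a \<Rightarrow> 'a \<Rightarrow> real) \<Rightarrow> real \<Rightarrow> 'a set \<Rightarrow> 'a set \<Rightarrow> 'a set \<Rightarrow> bool" where
  "carc d \<sigma> W X Y \<longleftrightarrow> X \<noteq> Y \<and> (\<exists>x\<in>X. \<exists>y\<in>Y. garc d \<sigma> W x y)"

definition cantichain :: "('a \<Rightarrow> 'a \<Rightarrow> real) \<Rightarrow> real \<Rightarrow> 'a set \<Rightarrow> 'a set set \<Rightarrow> bool" where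
  "cantichain d \<sigma> W M \<longleftrightarrow> M \<subseteq> gsccs d \<sigma> W \<and>
     (\<forall>X\<in>M. \<forall>Y\<in>M. X \<noteq> Y \<longrightarrow> \<not> creach d \<sigma> W X Y)"

definition max_cantichain :: "('a \<Rightarrow> 'a \<Rightarrow> real) \<Rightarrow> real \<Rightarrow> 'a set \<Rightarrow> 'a set set \<Rightarrow> bool" where
  "max_cantichain d \<sigma> W M \<longleftrightarrow> cantichain d \<sigma> W M \<and>
     (\<forall>M'. cantichain d \<sigma> W M' \<longrightarrow> card M' \<le> card M)"

text \<open>A path in G_c as the nonempty list of its vertices (number of arcs = length - 1).\<close>
definition cpath :: "('a \<Rightarrow> 'a \<Rightarrow> real) \<Rightarrow> real \<Rightarrow> 'a set \<Rightarrow> 'a set list \<Rightarrow> bool" where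
  "cpath d \<sigma> W P \<longleftrightarrow> P \<noteq> [] \<and> distinct P \<and> set P \<subseteq> gsccs d \<sigma> W \<and>
     (\<forall>i. i + 1 < length P \<longrightarrow> carc d \<sigma> W (P ! i) (P ! (i + 1)))"

definition shortest_cpath :: "('a \<Rightarrow> 'a \<Rightarrow> real) \<Rightarrow> real \<Rightarrow> 'a set \<Rightarrow> 'a set list \<Rightarrow> bool" where
  "shortest_cpath d \<sigma> W P \<longleftrightarrow> cpath d \<sigma> W P \<and>
     (\<forall>Q. cpath d \<sigma> W Q \<and> hd Q = hd P \<and> last Q = last P \<longrightarrow> length P \<le> length Q)"

text \<open>Admissible choices of L: a shortest path with 2k-1 arcs, or, if none
  exists, a longest one among all shortest paths.\<close>
definition valid_L :: "('a \<Rightarrow> 'a \<Rightarrow> real) \<Rightarrow> real \<Rightarrow> 'a set \<Rightarrow> nat \<Rightarrow> 'a set list \<Rightarrow> bool" where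
  "valid_L d \<sigma> W k P \<longleftrightarrow> shortest_cpath d \<sigma> W P \<and>
     (length P = 2 * k \<or>
      ((\<nexists>Q. shortest_cpath d \<sigma> W Q \<and> length Q = 2 * k) \<and>
       (\<forall>Q. shortest_cpath d \<sigma> W Q \<longrightarrow> length Q \<le> length P)))"

text \<open>Greedy selection of k points of I: the list g records the selection order;
  the first point is arbitrary, each further point maximizes the d_min-distance
  to the already selected points.\<close>
definition setdist :: "('a \<Rightarrow> 'a \<Rightarrow> real) \<Rightarrow> 'a \<Rightarrow> 'a list \<Rightarrow> real" where
  "setdist d p xs = Min ((\<lambda>s. dmin d p s) ` set xs)"

definition greedy :: "('a \<Rightarrow> 'a \<Rightarrow> real) \<Rightarrow> 'a set \<Rightarrow> nat \<Rightarrow> 'a list \<Rightarrow> bool" where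
  "greedy d I k g \<longleftrightarrow> length g = k \<and> distinct g \<and> set g \<subseteq> I \<and>
     (\<forall>j. 0 < j \<and> j < k \<longrightarrow>
        (\<forall>p \<in> I - set (take j g). setdist d p (take j g) \<le> setdist d (g ! j) (take j g)))"

text \<open>res is a possible result of Extract(W,d,sigma,k) (None = returns nothing),
  over all admissible choices of C, M, L, representatives and greedy ties.\<close>
definition extract_result ::
  "('a \<Rightarrow> 'a \<Rightarrow> real) \<Rightarrow> 'a set \<Rightarrow> real \<Rightarrow> nat \<Rightarrow> 'a set option \<Rightarrow> bool" where
  "extract_result d W \<sigma> k res \<longleftrightarrow> (\<exists>C M L I.
     (has_dicycle d \<sigma> W \<longrightarrow> chordless_dicycle d \<sigma> W C) \<and>
     max_cantichain d \<sigma> W M \<and> valid_L d \<sigma> W k L \<and>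
     (if has_dicycle d \<sigma> W \<and> int (length C) \<ge> 2 * int (card M) - 1 \<and> length C \<ge> length L
      then I = {C ! i | i. i < length C \<and> even i}
      else if 2 * int (card M) - 1 \<ge> int (length L)
      then (\<exists>f. (\<forall>X\<in>M. f X \<in> X) \<and> I = f ` M)
      else (\<exists>f. (\<forall>X\<in>set L. f X \<in> X) \<and> I = f ` {L ! i | i. i < length L \<and> even i})) \<and>
     (if k \<le> card I then (\<exists>g. greedy d I k g \<and> res = Some (set g)) else res = None))"

definition bac_radii :: "'a set \<Rightarrow> ('a \<Rightarrow> 'a \<Rightarrow> real) \<Rightarrow> real set" where
  "bac_radii U d = {d i j | i j. i \<in> U \<and> j \<in> U \<and> i \<noteq> j \<and> d i j > 0}"

text \<open>A run of BAC: for each R, a Cluster output Uc R and an Extract output out R.\<close>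
definition bac_run ::
  "'a set \<Rightarrow> ('a \<Rightarrow> 'a \<Rightarrow> real) \<Rightarrow> nat \<Rightarrow> (real \<Rightarrow> 'a set) \<Rightarrow> (real \<Rightarrow> 'a set option) \<Rightarrow> bool" where
  "bac_run U d k Uc out \<longleftrightarrow> (\<forall>R \<in> bac_radii U d.
     cluster_result d U R (Uc R) \<and> extract_result d (Uc R) (R / (2 * real k)) k (out R))"

definition bac_returns ::
  "'a set \<Rightarrow> ('a \<Rightarrow> 'a \<Rightarrow> real) \<Rightarrow> (real \<Rightarrow> 'a set option) \<Rightarrow> 'a set \<Rightarrow> bool" where
  "bac_returns U d out S \<longleftrightarrow> (\<exists>R \<in> bac_radii U d. out R = Some S \<and>
     (\<forall>R' \<in> bac_radii U d. \<forall>S'. out R' = Some S' \<longrightarrow> diver d S' \<le> diver d S))"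

end

theory Submission
  imports Defs "HOL-Library.Transitive_Closure_Table"
begin

text \<open>
  Let R0 be the least radius tried by BAC with R0 \<ge> R*/3, so that no distance lies in
  [R*/3, R0), and let \<sigma> = R0/(2k). The Cluster centres are pairwise 2k\<sigma>-separated in d_max,
  hence every directed cycle of the threshold digraph G on them has more than 2k vertices:
  going around the cycle bounds the reverse distance of its first arc. The centres covering an
  optimal solution are k points pairwise at distance at least R0 = 2k\<sigma>, so if G is acyclic
  they either lie in pairwise unreachable components, an antichain of size k, or a shortest
  path of the condensation has 2k vertices. Whichever candidate Extract picks is therefore
  large enough, and its points (every other vertex of a chordless cycle or of a shortest path,
  or one point per component of an antichain) span no arcs of G, except possibly the two ends
  of the cycle, which greedy selection never takes both of. So the output is \<sigma>-separated,
  and BAC returns a set of diversity at least R0/(2k) \<ge> R*/(6k).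
\<close>

section \<open>Walks\<close>

definition walk :: "('b \<Rightarrow> 'b \<Rightarrow> bool) \<Rightarrow> 'b list \<Rightarrow> bool" where
  "walk E xs \<longleftrightarrow> xs \<noteq> [] \<and> successively E xs"

lemma rtrancl_path_iff_walk:
  "rtrancl_path E x xs y \<longleftrightarrow> walk E (x # xs) \<and> last (x # xs) = y"
proof (induction xs arbitrary: x)
  case Nil
  then show ?case
    by (auto simp: walk_def elim: rtrancl_path.cases intro: rtrancl_path.base)
next
  case (Cons z zs)
  have "rtrancl_path E x (z # zs) y \<longleftrightarrow> E x z \<and> rtrancl_path E z zs y"
    by (auto elim: rtrancl_path.cases intro: rtrancl_path.step)
  then show ?case
    using Cons.IH by (simp add: walk_def)
qed

lemma walk_append: "walk E xs \<Longrightarrow> walk E ys \<Longrightarrow> E (last xs) (hd ys) \<Longrightarrow> walk E (xs @ ys)"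
  by (auto simp: walk_def successively_append_iff)

lemma walk_take: "walk E xs \<Longrightarrow> 0 < n \<Longrightarrow> walk E (take n xs)"
  unfolding walk_def by (metis append_take_drop_id successively_append_iff take_eq_Nil neq0_conv)

lemma walk_drop: "walk E xs \<Longrightarrow> n < length xs \<Longrightarrow> walk E (drop n xs)"
  unfolding walk_def by (metis append_take_drop_id successively_append_iff drop_eq_Nil not_le)

lemma walk_remove_repeats:
  assumes "walk E xs"
  obtains ys where "walk E ys" "distinct ys" "hd ys = hd xs" "last ys = last xs"
    "set ys \<subseteq> set xs" "length ys \<le> length xs"
proof -
  obtain x xs' where xs: "xs = x # xs'"
    using assms by (cases xs) (auto simp: walk_def)
  then have "rtrancl_path E x xs' (last xs)"
    using assms by (simp add: rtrancl_path_iff_walk)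
  then obtain ys' where ys': "rtrancl_path E x ys' (last xs)" "distinct (x # ys')" "set ys' \<subseteq> set xs'"
    by (rule rtrancl_path_distinct)
  have "length (x # ys') = card (set (x # ys'))"
    using ys'(2) by (simp add: distinct_card)
  also have "\<dots> \<le> card (set xs)"
    using ys'(3) xs by (intro card_mono) auto
  also have "\<dots> \<le> length xs"
    by (rule card_length)
  finally show thesis
    using ys' xs by (intro that[of "x # ys'"]) (auto simp: rtrancl_path_iff_walk)
qed

lemma greach_refl: "greach d \<sigma> W u u"
  by (simp add: greach_def)

lemma greach_trans: "greach d \<sigma> W u v \<Longrightarrow> greach d \<sigma> W v w \<Longrightarrow> greach d \<sigma> W u w"
  unfolding greach_def by (rule rtrancl_trans)

lemma garc_imp_greach: "garc d \<sigma> W u v \<Longrightarrow> greach d \<sigma> W u v"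
  by (simp add: greach_def r_into_rtrancl)

lemma greach_walk:
  assumes "greach d \<sigma> W u v" "u \<in> W"
  obtains xs where "walk (garc d \<sigma> W) xs" "distinct xs" "set xs \<subseteq> W" "hd xs = u" "last xs = v"
proof -
  have "(garc d \<sigma> W)\<^sup>*\<^sup>* u v"
    using assms(1) by (simp add: greach_def rtranclp_rtrancl_eq[symmetric])
  then obtain xs0 where "rtrancl_path (garc d \<sigma> W) u xs0 v"
    by (auto simp: rtranclp_eq_rtrancl_path)
  then obtain xs where xs: "rtrancl_path (garc d \<sigma> W) u xs v" "distinct (u # xs)"
    by (rule rtrancl_path_distinct)
  have "set xs \<subseteq> W"
    using xs(1) by (induction rule: rtrancl_path.induct) (auto simp: garc_def)
  then show thesis
    using xs assms(2) by (intro that[of "u # xs"]) (auto simp: rtrancl_path_iff_walk)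
qed

lemma gscc_self: "u \<in> W \<Longrightarrow> u \<in> gscc d \<sigma> W u"
  by (simp add: gscc_def greach_refl)

lemma gsccs_subset: "X \<in> gsccs d \<sigma> W \<Longrightarrow> X \<subseteq> W"
  by (auto simp: gsccs_def gscc_def)

lemma gsccs_nonempty: "X \<in> gsccs d \<sigma> W \<Longrightarrow> X \<noteq> {}"
  by (auto simp: gsccs_def dest: gscc_self)

lemma gsccs_eq_gscc: "X \<in> gsccs d \<sigma> W \<Longrightarrow> a \<in> X \<Longrightarrow> X = gscc d \<sigma> W a"
  unfolding gsccs_def gscc_def by (auto intro: greach_trans)

lemma gsccs_greach: "X \<in> gsccs d \<sigma> W \<Longrightarrow> a \<in> X \<Longrightarrow> b \<in> X \<Longrightarrow> greach d \<sigma> W a b"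
  unfolding gsccs_def gscc_def by (auto intro: greach_trans)

lemma gsccs_disjoint:
  "X \<in> gsccs d \<sigma> W \<Longrightarrow> Y \<in> gsccs d \<sigma> W \<Longrightarrow> z \<in> X \<Longrightarrow> z \<in> Y \<Longrightarrow> X = Y"
  by (metis gsccs_eq_gscc)

lemma finite_gsccs: "finite W \<Longrightarrow> finite (gsccs d \<sigma> W)"
  by (simp add: gsccs_def)

section \<open>Directed cycles\<close>

lemma dicycle_iff_closed_walk:
  "dicycle d \<sigma> W cs \<longleftrightarrow> cs \<noteq> [] \<and> distinct cs \<and> walk (garc d \<sigma> W) (cs @ [hd cs])"
proof (cases "cs = []")
  case False
  define l where "l = length cs"
  have nth_closed: "(cs @ [hd cs]) ! i = cs ! i" if "i < l" for i
    using that by (simp add: nth_append l_def)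
  have nth_closed_Suc: "(cs @ [hd cs]) ! Suc i = cs ! ((i + 1) mod l)" if "i < l" for i
  proof (cases "Suc i < l")
    case False
    then have "Suc i = l"
      using that by simp
    then show ?thesis
      using \<open>cs \<noteq> []\<close> by (simp add: nth_append hd_conv_nth l_def)
  qed (simp add: nth_append l_def)
  have "walk (garc d \<sigma> W) (cs @ [hd cs]) \<longleftrightarrow>
      (\<forall>i < l. garc d \<sigma> W ((cs @ [hd cs]) ! i) ((cs @ [hd cs]) ! Suc i))"
    by (simp add: walk_def successively_conv_nth l_def)
  also have "\<dots> \<longleftrightarrow> (\<forall>i < l. garc d \<sigma> W (cs ! i) (cs ! ((i + 1) mod l)))"
    by (simp add: nth_closed nth_closed_Suc)
  finally have closed_walk_iff: "walk (garc d \<sigma> W) (cs @ [hd cs]) \<longleftrightarrow> \<dots>" .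
  have "set cs \<subseteq> W" if "\<forall>i < l. garc d \<sigma> W (cs ! i) (cs ! ((i + 1) mod l))"
    using that by (auto simp: l_def in_set_conv_nth garc_def)
  then show ?thesis
    using False closed_walk_iff by (auto simp: dicycle_def l_def)
qed (simp add: dicycle_def)

lemma dicycle_length_ge_2:
  assumes "dicycle d \<sigma> W cs"
  shows "2 \<le> length cs"
proof -
  obtain x xs where cs: "cs = x # xs"
    using assms by (cases cs) (auto simp: dicycle_def)
  have "xs \<noteq> []"
    using assms by (auto simp: cs dicycle_iff_closed_walk walk_def garc_def)
  then show ?thesis
    by (cases xs) (simp_all add: cs)
qed

lemma has_dicycle_if_mutually_reachable:
  assumes "u \<noteq> v" "greach d \<sigma> W u v" "greach d \<sigma> W v u"
  shows "has_dicycle d \<sigma> W"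
proof -
  have "(u, v) \<in> {(i, j). garc d \<sigma> W i j}\<^sup>+"
    using assms(1,2) unfolding greach_def by (meson rtranclD)
  then obtain w where "(u, w) \<in> {(i, j). garc d \<sigma> W i j}" "(w, v) \<in> {(i, j). garc d \<sigma> W i j}\<^sup>*"
    by (meson tranclD)
  then have uw: "garc d \<sigma> W u w" and "greach d \<sigma> W w v"
    by (simp_all add: greach_def)
  then have "greach d \<sigma> W w u" "w \<in> W"
    using assms(3) greach_trans by (auto simp: garc_def)
  then obtain ys where ys: "walk (garc d \<sigma> W) ys" "distinct ys" "hd ys = w" "last ys = u"
    by (rule greach_walk)
  then have "walk (garc d \<sigma> W) (ys @ [hd ys])"
    using uw by (intro walk_append) (auto simp: walk_def)
  then have "dicycle d \<sigma> W ys"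
    using ys(1,2) by (simp add: dicycle_iff_closed_walk walk_def)
  then show ?thesis
    unfolding has_dicycle_def ..
qed

lemma gscc_acyclic:
  assumes "\<not> has_dicycle d \<sigma> W" "x \<in> W"
  shows "gscc d \<sigma> W x = {x}"
proof -
  have "v = x" if "v \<in> gscc d \<sigma> W x" for v
    using that assms(1) has_dicycle_if_mutually_reachable[of x v d \<sigma> W] by (auto simp: gscc_def)
  then show ?thesis
    using gscc_self[OF assms(2)] by blast
qed

lemma dicycle_rotate:
  assumes "dicycle d \<sigma> W cs"
  shows "dicycle d \<sigma> W (rotate n cs)"
  unfolding dicycle_def
proof (intro conjI allI impI)
  define l where "l = length cs"
  fix i assume "i < length (rotate n cs)"
  then have i: "i < l" by (simp add: l_def)
  have "garc d \<sigma> W (cs ! ((n + i) mod l)) (cs ! (((n + i) mod l + 1) mod l))"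
    using assms i unfolding dicycle_def l_def by auto
  moreover have "((n + i) mod l + 1) mod l = (n + (i + 1) mod l) mod l"
    by (simp add: mod_simps)
  moreover have "(i + 1) mod l < l"
    using i by simp
  then have "rotate n cs ! i = cs ! ((n + i) mod l)"
    "rotate n cs ! ((i + 1) mod l) = cs ! ((n + (i + 1) mod l) mod l)"
    using i by (simp_all only: nth_rotate l_def)
  ultimately show "garc d \<sigma> W (rotate n cs ! i) (rotate n cs ! ((i + 1) mod length (rotate n cs)))"
    by (simp add: l_def)
qed (use assms in \<open>auto simp: dicycle_def\<close>)

lemma dicycle_take:
  assumes "dicycle d \<sigma> W cs" "0 < m" "m \<le> length cs" "garc d \<sigma> W (cs ! (m - 1)) (cs ! 0)"
  shows "dicycle d \<sigma> W (take m cs)"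
proof -
  have "walk (garc d \<sigma> W) (take m (cs @ [hd cs]))"
    using assms(1,2) by (intro walk_take) (auto simp: dicycle_iff_closed_walk)
  then have "walk (garc d \<sigma> W) (take m cs @ [hd (take m cs)])"
    using assms by (intro walk_append) (auto simp: walk_def hd_conv_nth last_conv_nth)
  then show ?thesis
    using assms(1,2) by (simp add: dicycle_iff_closed_walk distinct_take)
qed

text \<open>Rotating the cycle to start at j, the chord closes the segment from j to i.\<close>
lemma dicycle_chord_shortcut:
  assumes cyc: "dicycle d \<sigma> W cs" and ij: "i < length cs" "j < length cs" "j \<noteq> (i + 1) mod length cs"
    and chord: "garc d \<sigma> W (cs ! i) (cs ! j)"
  shows "\<exists>cs'. dicycle d \<sigma> W cs' \<and> length cs' < length cs"
proof -
  define l where "l = length cs"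
  have ij': "i < l" "j < l" "j \<noteq> (i + 1) mod l"
    using ij by (simp_all add: l_def)
  define i' where "i' = (i + (l - j)) mod l"
  have "i' + 1 < l"
  proof (cases "j \<le> i")
    case True
    then have "i' = i - j"
      using ij' by (simp add: i'_def mod_if)
    then show ?thesis
      using True ij' by (cases "i = l - 1") (auto simp: i'_def)
  next
    case False
    then have "i' = i + (l - j)"
      using ij' by (simp add: i'_def)
    then show ?thesis
      using False ij' by auto
  qed
  moreover have "rotate j cs ! i' = cs ! i"
  proof -
    have "(j + (i + (l - j)) mod l) mod l = (i + l) mod l"
      using ij' by (simp add: mod_simps)
    moreover have "i' < l"
      using ij' by (simp add: i'_def)
    ultimately show ?thesis
      using ij nth_rotate[of i' cs j] by (simp add: i'_def l_def)
  qed
  moreover have "rotate j cs ! 0 = cs ! j"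
  proof -
    have "0 < length cs"
      using ij(1) by linarith
    then show ?thesis
      using ij(2) nth_rotate[of 0 cs j] by simp
  qed
  ultimately have "dicycle d \<sigma> W (take (i' + 1) (rotate j cs))"
    using chord dicycle_rotate[OF cyc] by (intro dicycle_take) (auto simp: l_def)
  then show ?thesis
    using \<open>i' + 1 < l\<close> by (intro exI[of _ "take (i' + 1) (rotate j cs)"]) (simp add: l_def)
qed

lemma chordless_dicycle_exists:
  assumes "has_dicycle d \<sigma> W"
  shows "\<exists>C. chordless_dicycle d \<sigma> W C"
proof -
  obtain cs0 where "dicycle d \<sigma> W cs0"
    using assms by (auto simp: has_dicycle_def)
  then obtain cs where cyc: "dicycle d \<sigma> W cs"
    and shortest: "\<And>cs'. dicycle d \<sigma> W cs' \<Longrightarrow> length cs \<le> length cs'"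
    using ex_has_least_nat[of "dicycle d \<sigma> W" cs0 length] by blast
  have "\<not> garc d \<sigma> W (cs ! i) (cs ! j)"
    if "i < length cs" "j < length cs" "j \<noteq> (i + 1) mod length cs" for i j
    using dicycle_chord_shortcut[OF cyc that] shortest by (meson not_le)
  then have "chordless_dicycle d \<sigma> W cs"
    using cyc by (auto simp: chordless_dicycle_def)
  then show ?thesis ..
qed

section \<open>Separated sets and distances along walks\<close>

lemma asym_pseudometricD:
  assumes "asym_pseudometric U d"
  shows "finite U" "u \<in> U \<Longrightarrow> d u u = 0"
    "u \<in> U \<Longrightarrow> v \<in> U \<Longrightarrow> w \<in> U \<Longrightarrow> d u v \<le> d u w + d w v"
  using assms unfolding asym_pseudometric_def by auto

definition separated :: "('a \<Rightarrow> 'a \<Rightarrow> real) \<Rightarrow> real \<Rightarrow> 'a set \<Rightarrow> bool" where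
  "separated d r S \<longleftrightarrow> (\<forall>x\<in>S. \<forall>y\<in>S. x \<noteq> y \<longrightarrow> r \<le> d x y)"

lemma separated_subset: "separated d r S \<Longrightarrow> T \<subseteq> S \<Longrightarrow> separated d r T"
  by (auto simp: separated_def)

lemma separated_dmin_iff: "separated (dmin d) r S \<longleftrightarrow> separated d r S"
  by (auto simp: separated_def dmin_def)

lemma diver_attained:
  assumes "finite S" "2 \<le> card S"
  shows "separated d (diver d S) S" "\<exists>u\<in>S. \<exists>v\<in>S. u \<noteq> v \<and> d u v = diver d S"
proof -
  define D where "D = {d u v | u v. u \<in> S \<and> v \<in> S \<and> u \<noteq> v}"
  have "D \<subseteq> (\<lambda>(u, v). d u v) ` (S \<times> S)"
    by (auto simp: D_def)
  then have "finite D"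
    using assms(1) finite_subset by blast
  have "\<not> card S \<le> Suc 0"
    using assms(2) by simp
  then obtain u v where "u \<in> S" "v \<in> S" "u \<noteq> v"
    using card_le_Suc0_iff_eq[OF assms(1)] by blast
  then have "D \<noteq> {}"
    by (auto simp: D_def)
  with \<open>finite D\<close> have "diver d S \<in> D"
    unfolding diver_def D_def[symmetric] by (rule Min_in)
  then obtain x y where "x \<in> S" "y \<in> S" "x \<noteq> y" "diver d S = d x y"
    unfolding D_def by blast
  then show "\<exists>u\<in>S. \<exists>v\<in>S. u \<noteq> v \<and> d u v = diver d S"
    by metis
  show "separated d (diver d S) S"
    unfolding separated_def
  proof (intro ballI impI)
    fix x y assume "x \<in> S" "y \<in> S" "x \<noteq> y"
    then have "d x y \<in> D"
      by (auto simp: D_def)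
    with \<open>finite D\<close> show "diver d S \<le> d x y"
      unfolding diver_def D_def[symmetric] by (rule Min_le)
  qed
qed

lemma diver_ge_if_separated:
  assumes "finite S" "2 \<le> card S" "separated d r S"
  shows "r \<le> diver d S"
proof -
  obtain u v where "u \<in> S" "v \<in> S" "u \<noteq> v" "d u v = diver d S"
    using diver_attained(2)[OF assms(1,2)] by blast
  then show ?thesis
    using assms(3) unfolding separated_def by metis
qed

lemma dist_hd_last_le:
  assumes pm: "asym_pseudometric U d"
    and "set xs \<subseteq> U" "xs \<noteq> []" "successively (\<lambda>x y. d x y \<le> \<sigma>) xs"
  shows "d (hd xs) (last xs) \<le> real (length xs - 1) * \<sigma>"
  using assms(2-)
proof (induction xs)
  case (Cons x xs)
  show ?case
  proof (cases "xs = []")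
    case True
    then show ?thesis
      using Cons.prems asym_pseudometricD(2)[OF pm] by simp
  next
    case False
    have "d x (last xs) \<le> d x (hd xs) + d (hd xs) (last xs)"
      using Cons.prems False by (intro asym_pseudometricD(3)[OF pm]) auto
    also have "\<dots> \<le> \<sigma> + real (length xs - 1) * \<sigma>"
      using Cons False by (intro add_mono) (auto simp: successively_Cons)
    also have "\<dots> = real (length (x # xs) - 1) * \<sigma>"
      using False by (cases xs) (simp_all add: algebra_simps)
    finally show ?thesis
      using False by simp
  qed
qed simp

lemma walk_garc_steps_le:
  assumes "walk (garc d \<sigma> W) xs"
  shows "successively (\<lambda>x y. d x y \<le> \<sigma>) xs"
proof -
  have "successively (garc d \<sigma> W) xs"
    using assms by (simp add: walk_def)
  then show ?thesis
    by (rule successively_mono) (simp add: garc_def)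
qed

text \<open>Going once around a directed cycle bounds the reverse distance of its first arc, which
  the separation forces to be large.\<close>
lemma dicycle_length_if_separated:
  assumes pm: "asym_pseudometric U d" and "W \<subseteq> U" "0 < \<sigma>"
    and sep: "separated (dmax d) (2 * real k * \<sigma>) W"
    and cyc: "dicycle d \<sigma> W cs"
  shows "2 * k + 1 \<le> length cs"
proof -
  obtain x y zs where cs: "cs = x # y # zs"
    using dicycle_length_ge_2[OF cyc] by (cases cs; cases "tl cs") auto
  have "walk (garc d \<sigma> W) (x # y # zs @ [x])" and "x \<noteq> y"
    using cyc by (auto simp: dicycle_iff_closed_walk cs)
  then have "garc d \<sigma> W x y" and back_walk: "walk (garc d \<sigma> W) (y # zs @ [x])"
    by (simp_all add: walk_def)
  have "set cs \<subseteq> W"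
    using cyc by (simp add: dicycle_def)
  have "set (y # zs @ [x]) \<subseteq> U"
    using \<open>set cs \<subseteq> W\<close> assms(2) by (auto simp: cs)
  from dist_hd_last_le[OF pm this _ walk_garc_steps_le[OF back_walk]]
  have "d y x \<le> real (length cs - 1) * \<sigma>"
    by (simp add: cs)
  moreover have "d x y < \<sigma>"
    using \<open>garc d \<sigma> W x y\<close> by (simp add: garc_def)
  moreover have "2 * real k * \<sigma> \<le> dmax d x y"
    using sep \<open>set cs \<subseteq> W\<close> \<open>x \<noteq> y\<close> by (auto simp: separated_def cs)
  moreover have "\<sigma> \<le> real (length cs - 1) * \<sigma>"
    using \<open>0 < \<sigma>\<close> by (simp add: cs)
  ultimately have "2 * real k * \<sigma> \<le> real (length cs - 1) * \<sigma>"
    by (auto simp: dmax_def)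
  then have "2 * real k \<le> real (length cs - 1)"
    using \<open>0 < \<sigma>\<close> by simp
  then show ?thesis
    by (simp add: cs)
qed

section \<open>Paths in the condensation\<close>

lemma cpath_iff_walk:
  "cpath d \<sigma> W P \<longleftrightarrow> walk (carc d \<sigma> W) P \<and> distinct P \<and> set P \<subseteq> gsccs d \<sigma> W"
  unfolding cpath_def walk_def successively_conv_nth by auto

lemma cpath_carc: "cpath d \<sigma> W P \<Longrightarrow> Suc i < length P \<Longrightarrow> carc d \<sigma> W (P ! i) (P ! Suc i)"
  unfolding cpath_def by auto

lemma shortest_cpath_le_walk:
  assumes "shortest_cpath d \<sigma> W P" "walk (carc d \<sigma> W) Z" "set Z \<subseteq> gsccs d \<sigma> W"
    "hd Z = hd P" "last Z = last P"
  shows "length P \<le> length Z"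
proof -
  obtain Q where Q: "walk (carc d \<sigma> W) Q" "distinct Q" "hd Q = hd Z" "last Q = last Z"
    "set Q \<subseteq> set Z" "length Q \<le> length Z"
    using assms(2) by (rule walk_remove_repeats)
  then have "cpath d \<sigma> W Q"
    using assms(3) by (auto simp: cpath_iff_walk)
  then have "length P \<le> length Q"
    using assms(1,4,5) Q(3,4) unfolding shortest_cpath_def by auto
  then show ?thesis
    using Q(6) by simp
qed

lemma shortest_cpath_take:
  assumes sp: "shortest_cpath d \<sigma> W P" and n: "0 < n" "n \<le> length P"
  shows "shortest_cpath d \<sigma> W (take n P)"
  unfolding shortest_cpath_def
proof (intro conjI allI impI)
  have walkP: "walk (carc d \<sigma> W) P" and setP: "set P \<subseteq> gsccs d \<sigma> W"
    using sp by (auto simp: shortest_cpath_def cpath_iff_walk)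
  then show "cpath d \<sigma> W (take n P)"
    using sp n by (auto simp: shortest_cpath_def cpath_iff_walk walk_take dest: in_set_takeD)
  fix Q assume Q: "cpath d \<sigma> W Q \<and> hd Q = hd (take n P) \<and> last Q = last (take n P)"
  then have walkQ: "walk (carc d \<sigma> W) Q" and setQ: "set Q \<subseteq> gsccs d \<sigma> W"
    by (auto simp: cpath_iff_walk)
  have "take n P = take (n - 1) P @ [P ! (n - 1)]"
    using n take_Suc_conv_app_nth[of "n - 1" P] by simp
  then have lastQ: "last Q = P ! (n - 1)"
    using Q by simp
  have "walk (carc d \<sigma> W) (Q @ drop n P) \<and> last (Q @ drop n P) = last P"
  proof (cases "n < length P")
    case True
    have "carc d \<sigma> W (last Q) (hd (drop n P))"
      using sp n True lastQ cpath_carc[of d \<sigma> W P "n - 1"]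
      by (simp add: hd_drop_conv_nth shortest_cpath_def)
    then show ?thesis
      using walkQ walkP True by (auto intro: walk_append walk_drop)
  next
    case False
    then show ?thesis
      using walkQ lastQ n by (simp add: last_conv_nth)
  qed
  moreover have "hd (Q @ drop n P) = hd P"
    using Q walkQ n by (simp add: walk_def)
  moreover have "set (Q @ drop n P) \<subseteq> gsccs d \<sigma> W"
    using setQ setP by (auto dest: in_set_dropD)
  ultimately have "length P \<le> length (Q @ drop n P)"
    using sp by (intro shortest_cpath_le_walk) auto
  then show "length (take n P) \<le> length Q"
    using n by simp
qed

lemma shortest_cpath_no_shortcut:
  assumes sp: "shortest_cpath d \<sigma> W P" and ij: "Suc i < j" "j < length P"
  shows "\<not> carc d \<sigma> W (P ! i) (P ! j)"
proof
  assume shortcut: "carc d \<sigma> W (P ! i) (P ! j)"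
  have walkP: "walk (carc d \<sigma> W) P" and setP: "set P \<subseteq> gsccs d \<sigma> W"
    using sp by (auto simp: shortest_cpath_def cpath_iff_walk)
  define Z where "Z = take (Suc i) P @ drop j P"
  have "last (take (Suc i) P) = P ! i" "hd (drop j P) = P ! j"
    using ij by (simp_all add: take_Suc_conv_app_nth hd_drop_conv_nth)
  then have "walk (carc d \<sigma> W) Z"
    unfolding Z_def using walkP ij shortcut by (intro walk_append walk_take walk_drop) auto
  moreover have "set Z \<subseteq> gsccs d \<sigma> W"
    using setP by (auto simp: Z_def dest: in_set_dropD in_set_takeD)
  moreover have "hd Z = hd P" "last Z = last P"
    using walkP ij by (auto simp: Z_def walk_def)
  ultimately have "length P \<le> length Z"
    by (rule shortest_cpath_le_walk[OF sp])
  then show False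
    using ij by (simp add: Z_def)
qed

lemma cpath_greach:
  assumes cp: "cpath d \<sigma> W P" and ij: "i \<le> j" "j < length P"
    and a: "a \<in> P ! i" and b: "b \<in> P ! j"
  shows "greach d \<sigma> W a b"
  using ij b
proof (induction j arbitrary: b)
  case 0
  moreover have "P ! 0 \<in> gsccs d \<sigma> W"
    using cp by (auto simp: cpath_def)
  ultimately show ?case
    using a by (auto intro: gsccs_greach)
next
  case (Suc j)
  have comp: "P ! Suc j \<in> gsccs d \<sigma> W"
    using cp Suc.prems by (auto simp: cpath_def)
  show ?case
  proof (cases "i = Suc j")
    case True
    then show ?thesis
      using comp a Suc.prems by (auto intro: gsccs_greach)
  next
    case False
    obtain x y where xy: "x \<in> P ! j" "y \<in> P ! Suc j" "garc d \<sigma> W x y"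
      using cpath_carc[OF cp, of j] Suc.prems by (auto simp: carc_def)
    have "greach d \<sigma> W a x"
      using Suc.IH Suc.prems False xy by simp
    moreover have "greach d \<sigma> W y b"
      using comp xy Suc.prems by (auto intro: gsccs_greach)
    ultimately show ?thesis
      using xy(3) by (meson garc_imp_greach greach_trans)
  qed
qed

section \<open>The acyclic case\<close>

lemma acyclic_cpath_singletons:
  assumes dag: "\<not> has_dicycle d \<sigma> W" and cp: "cpath d \<sigma> W P"
  obtains xs where "P = map (\<lambda>x. {x}) xs" "walk (garc d \<sigma> W) xs" "set xs \<subseteq> W"
proof
  have singleton: "\<exists>x\<in>W. X = {x}" if "X \<in> set P" for X
  proof -
    have "X \<in> gsccs d \<sigma> W"
      using cp that by (auto simp: cpath_def)
    then obtain x where "x \<in> W" "X = gscc d \<sigma> W x"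
      unfolding gsccs_def by blast
    then show ?thesis
      using gscc_acyclic[OF dag] by auto
  qed
  show "P = map (\<lambda>x. {x}) (map the_elem P)"
    unfolding map_map by (rule map_idI[symmetric]) (use singleton in fastforce)
  show "set (map the_elem P) \<subseteq> W"
    using singleton by fastforce
  have "successively (carc d \<sigma> W) P"
    using cp by (simp add: cpath_iff_walk walk_def)
  then have "successively (\<lambda>X Y. garc d \<sigma> W (the_elem X) (the_elem Y)) P"
  proof (rule successively_mono)
    fix X Y assume "X \<in> set P" "Y \<in> set P" "carc d \<sigma> W X Y"
    then show "garc d \<sigma> W (the_elem X) (the_elem Y)"
      using singleton[of X] singleton[of Y] by (auto simp: carc_def)
  qed
  then show "walk (garc d \<sigma> W) (map the_elem P)"
    using cp by (simp add: walk_def successively_map cpath_def)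
qed

lemma acyclic_cpath_dist_le:
  assumes pm: "asym_pseudometric U d" and "W \<subseteq> U" and dag: "\<not> has_dicycle d \<sigma> W"
    and "cpath d \<sigma> W P" "hd P = {a}" "last P = {b}"
  shows "d a b \<le> real (length P - 1) * \<sigma>"
proof -
  obtain xs where xs: "P = map (\<lambda>x. {x}) xs" "walk (garc d \<sigma> W) xs" "set xs \<subseteq> W"
    using dag assms(4) by (rule acyclic_cpath_singletons)
  then have "xs \<noteq> []" "hd xs = a" "last xs = b"
    using assms(5,6) by (auto simp: walk_def hd_map last_map)
  moreover have "set xs \<subseteq> U"
    using xs(3) assms(2) by blast
  ultimately show ?thesis
    using dist_hd_last_le[OF pm _ _ walk_garc_steps_le[OF xs(2)]] xs(1) by simp
qed

lemma acyclic_shortest_cpath_exists: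
  assumes dag: "\<not> has_dicycle d \<sigma> W" and "greach d \<sigma> W u v" "u \<in> W"
  shows "\<exists>P. shortest_cpath d \<sigma> W P \<and> hd P = {u} \<and> last P = {v}"
proof -
  obtain xs where xs: "walk (garc d \<sigma> W) xs" "distinct xs" "set xs \<subseteq> W" "hd xs = u" "last xs = v"
    using assms(2,3) by (rule greach_walk)
  have "walk (carc d \<sigma> W) (map (\<lambda>x. {x}) xs)"
  proof -
    have "successively (garc d \<sigma> W) xs"
      using xs(1) by (simp add: walk_def)
    then have "successively (\<lambda>x y. carc d \<sigma> W {x} {y}) xs"
      by (rule successively_mono) (auto simp: carc_def garc_def)
    then show ?thesis
      using xs(1) by (simp add: walk_def successively_map)
  qed
  moreover have "set (map (\<lambda>x. {x}) xs) \<subseteq> gsccs d \<sigma> W"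
    using xs(3) gscc_acyclic[OF dag] by (auto simp: gsccs_def)
  moreover have "distinct (map (\<lambda>x. {x}) xs)"
    using xs(2) by (simp add: distinct_map)
  ultimately have "cpath d \<sigma> W (map (\<lambda>x. {x}) xs)"
    by (simp add: cpath_iff_walk)
  moreover have "hd (map (\<lambda>x. {x}) xs) = {u}" "last (map (\<lambda>x. {x}) xs) = {v}"
    using xs by (auto simp: walk_def hd_map last_map)
  ultimately obtain P where P: "cpath d \<sigma> W P" "hd P = {u}" "last P = {v}"
    and least: "\<And>Q. cpath d \<sigma> W Q \<and> hd Q = {u} \<and> last Q = {v} \<Longrightarrow> length P \<le> length Q"
    using ex_has_least_nat[of "\<lambda>P. cpath d \<sigma> W P \<and> hd P = {u} \<and> last P = {v}" _ length] by metis
  then have "shortest_cpath d \<sigma> W P"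
    unfolding shortest_cpath_def by metis
  then show ?thesis
    using P by blast
qed

lemma cantichain_of_unreachable:
  assumes T: "T \<subseteq> W" and unreach: "\<forall>x\<in>T. \<forall>y\<in>T. x \<noteq> y \<longrightarrow> \<not> greach d \<sigma> W x y"
  shows "cantichain d \<sigma> W (gscc d \<sigma> W ` T)" "card (gscc d \<sigma> W ` T) = card T"
proof -
  have same: "x = y"
    if xy: "x \<in> T" "y \<in> T" "creach d \<sigma> W (gscc d \<sigma> W x) (gscc d \<sigma> W y)" for x y
  proof -
    obtain a b where ab: "a \<in> gscc d \<sigma> W x" "b \<in> gscc d \<sigma> W y" "greach d \<sigma> W a b"
      using xy(3) unfolding creach_def by blast
    then have "greach d \<sigma> W x a" "greach d \<sigma> W b y"
      by (simp_all add: gscc_def)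
    then have "greach d \<sigma> W x y"
      using ab(3) greach_trans by metis
    then show ?thesis
      using unreach xy(1,2) by blast
  qed
  have "inj_on (gscc d \<sigma> W) T"
  proof (rule inj_onI)
    fix x y assume xy: "x \<in> T" "y \<in> T" "gscc d \<sigma> W x = gscc d \<sigma> W y"
    have "y \<in> gscc d \<sigma> W x"
      using xy T gscc_self[of y W d \<sigma>] by auto
    then have "greach d \<sigma> W x y"
      by (simp add: gscc_def)
    then show "x = y"
      using unreach xy(1,2) by blast
  qed
  then show "card (gscc d \<sigma> W ` T) = card T"
    by (rule card_image)
  show "cantichain d \<sigma> W (gscc d \<sigma> W ` T)"
    unfolding cantichain_def
  proof (intro conjI ballI impI)
    show "gscc d \<sigma> W ` T \<subseteq> gsccs d \<sigma> W"
      using T by (auto simp: gsccs_def)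
    fix X Y assume "X \<in> gscc d \<sigma> W ` T" "Y \<in> gscc d \<sigma> W ` T" "X \<noteq> Y"
    then obtain x y where "x \<in> T" "y \<in> T" "X = gscc d \<sigma> W x" "Y = gscc d \<sigma> W y"
      by blast
    then show "\<not> creach d \<sigma> W X Y"
      using same[of x y] \<open>X \<noteq> Y\<close> by blast
  qed
qed

text \<open>A path with fewer than 2k vertices from one point of T to another would bring them closer
  than 2k\<sigma>. So either no point of T reaches another, and their components form an antichain, or
  some shortest path has at least 2k vertices.\<close>
lemma acyclic_antichain_or_shortest_cpath:
  assumes pm: "asym_pseudometric U d" and "W \<subseteq> U" "0 < \<sigma>" "0 < k"
    and dag: "\<not> has_dicycle d \<sigma> W"
    and T: "T \<subseteq> W" "card T = k" "separated d (2 * real k * \<sigma>) T"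
  shows "(\<exists>A. cantichain d \<sigma> W A \<and> k \<le> card A) \<or> (\<exists>P. shortest_cpath d \<sigma> W P \<and> length P = 2 * k)"
proof (cases "\<exists>x\<in>T. \<exists>y\<in>T. x \<noteq> y \<and> greach d \<sigma> W x y")
  case True
  then obtain x y where xy: "x \<in> T" "y \<in> T" "x \<noteq> y" "greach d \<sigma> W x y"
    by blast
  then obtain P where P: "shortest_cpath d \<sigma> W P" "hd P = {x}" "last P = {y}"
    using acyclic_shortest_cpath_exists[OF dag] T(1) by blast
  show ?thesis
  proof (cases "2 * k \<le> length P")
    case True
    then show ?thesis
      using shortest_cpath_take[OF P(1), of "2 * k"] \<open>0 < k\<close> by auto
  next
    case False
    have "d x y \<le> real (length P - 1) * \<sigma>"
      using acyclic_cpath_dist_le[OF pm assms(2) dag] P by (auto simp: shortest_cpath_def)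
    also have "\<dots> < 2 * real k * \<sigma>"
      using False \<open>0 < \<sigma>\<close> by (intro mult_strict_right_mono) auto
    finally have "d x y < 2 * real k * \<sigma>" .
    moreover have "2 * real k * \<sigma> \<le> d x y"
      using T(3) xy by (simp add: separated_def)
    ultimately show ?thesis
      by simp
  qed
next
  case False
  then show ?thesis
    using cantichain_of_unreachable[OF T(1)] T(2) by (metis order_refl)
qed

section \<open>Greedy selection\<close>

lemma finite_has_arg_max:
  fixes f :: "'b \<Rightarrow> 'c::linorder"
  assumes "finite S" "S \<noteq> {}"
  obtains x where "x \<in> S" "\<And>y. y \<in> S \<Longrightarrow> f y \<le> f x"
proof -
  have "Max (f ` S) \<in> f ` S"
    using assms by simp
  then obtain x where "x \<in> S" "f x = Max (f ` S)"
    by auto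
  then show thesis
    using assms by (intro that) auto
qed

lemma greedy_snoc:
  assumes g: "greedy d I j g" and "finite I" "j < card I"
  obtains x where "greedy d I (Suc j) (g @ [x])"
proof -
  have "card (set g) = j" "set g \<subseteq> I"
    using g by (auto simp: greedy_def distinct_card)
  then have "0 < card (I - set g)"
    using assms(2,3) by (simp add: card_Diff_subset finite_subset)
  then have "finite (I - set g)" "I - set g \<noteq> {}"
    by (simp_all add: card_gt_0_iff)
  then obtain x where x: "x \<in> I - set g"
    and x_max: "\<And>p. p \<in> I - set g \<Longrightarrow> setdist d p g \<le> setdist d x g"
    using finite_has_arg_max[where f = "\<lambda>p. setdist d p g"] by blast
  have "greedy d I (Suc j) (g @ [x])"
    unfolding greedy_def
  proof (intro conjI allI impI)
    show "length (g @ [x]) = Suc j" "distinct (g @ [x])" "set (g @ [x]) \<subseteq> I"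
      using g x by (auto simp: greedy_def)
    fix j' assume "0 < j' \<and> j' < Suc j"
    then show "\<forall>p\<in>I - set (take j' (g @ [x])).
        setdist d p (take j' (g @ [x])) \<le> setdist d ((g @ [x]) ! j') (take j' (g @ [x]))"
      using g x_max by (cases "j' < j") (auto simp: greedy_def nth_append)
  qed
  then show thesis
    by (rule that)
qed

lemma greedy_exists:
  assumes "finite I" "k \<le> card I"
  shows "\<exists>g. greedy d I k g"
  using assms(2)
proof (induction k)
  case 0
  show ?case
    by (intro exI[of _ "[]"]) (simp add: greedy_def)
next
  case (Suc k)
  then obtain g where "greedy d I k g"
    by auto
  then show ?case
    using greedy_snoc[OF _ assms(1)] Suc.prems by (metis Suc_le_eq)
qed

text \<open>When the second point of the exceptional pair {a, b} would be chosen, a third unchosen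
  point is at least as far from the chosen ones, so greedy selection never takes both.\<close>
lemma greedy_later_far:
  assumes gr: "greedy d I k g" and "finite I" "k < card I"
    and good: "\<forall>x\<in>I. \<forall>y\<in>I. x \<noteq> y \<and> {x, y} \<noteq> {a, b} \<longrightarrow> c \<le> dmin d x y"
    and ij: "i < j" "j < k"
  shows "c \<le> dmin d (g ! j) (g ! i)"
proof (rule ccontr)
  assume bad: "\<not> c \<le> dmin d (g ! j) (g ! i)"
  have g: "length g = k" "distinct g" "set g \<subseteq> I"
    using gr by (auto simp: greedy_def)
  have gij: "g ! i \<in> I" "g ! j \<in> I" "g ! j \<noteq> g ! i"
    using g ij by (auto simp: nth_eq_iff_index_eq)
  then have ab: "{g ! j, g ! i} = {a, b}"
    using good bad by blast
  define T where "T = take j g"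
  have "card (set T) = j" "set T \<subseteq> I"
    using g ij by (auto simp: T_def distinct_card dest: in_set_takeD)
  then have "2 \<le> card (I - set T)"
    using \<open>finite I\<close> \<open>k < card I\<close> ij by (simp add: card_Diff_subset finite_subset)
  moreover have "g ! j \<in> I - set T"
    using g ij gij by (auto simp: T_def in_set_conv_nth nth_eq_iff_index_eq)
  ultimately obtain p where p: "p \<in> I - set T" "p \<noteq> g ! j"
    by (metis card_le_Suc0_iff_eq finite_Diff \<open>finite I\<close> not_less_eq_eq numeral_2_eq_2 Suc_le_eq)
  have giT: "g ! i \<in> set T"
    using ij g by (auto simp: T_def in_set_conv_nth)
  have "c \<le> dmin d p s" if "s \<in> set T" for s
  proof -
    have "{p, s} \<noteq> {a, b}"
      using ab p giT that by auto
    moreover have "p \<noteq> s" "p \<in> I" "s \<in> I"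
      using p that \<open>set T \<subseteq> I\<close> by auto
    ultimately show ?thesis
      using good by blast
  qed
  moreover have "T \<noteq> []"
    using ij g(1) by (cases g) (simp_all add: T_def)
  ultimately have "c \<le> setdist d p T"
    unfolding setdist_def by (subst Min_ge_iff) auto
  also have "\<dots> \<le> setdist d (g ! j) T"
    using gr p ij unfolding greedy_def T_def by auto
  also have "\<dots> \<le> dmin d (g ! j) (g ! i)"
    using giT unfolding setdist_def by (intro Min_le) auto
  finally show False
    using bad by simp
qed

lemma greedy_separated_but_one_pair:
  assumes gr: "greedy d I k g" and "finite I" "k < card I"
    and good: "\<forall>x\<in>I. \<forall>y\<in>I. x \<noteq> y \<and> {x, y} \<noteq> {a, b} \<longrightarrow> c \<le> dmin d x y"
  shows "separated (dmin d) c (set g)"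
  unfolding separated_def
proof (intro ballI impI)
  fix x y assume xy: "x \<in> set g" "y \<in> set g" "x \<noteq> y"
  then obtain i j where "i < k" "j < k" "g ! i = x" "g ! j = y"
    using gr by (auto simp: greedy_def in_set_conv_nth)
  then show "c \<le> dmin d x y"
    using greedy_later_far[OF assms, of i j] greedy_later_far[OF assms, of j i] xy(3)
    by (cases i j rule: linorder_cases) (auto simp: dmin_def)
qed

section \<open>Independent sets of G\<close>

lemma card_even_nths:
  assumes "distinct xs"
  shows "card {xs ! i | i. i < length xs \<and> even i} = (length xs + 1) div 2"
proof -
  have "{xs ! i | i. i < length xs \<and> even i} = (\<lambda>t. xs ! (2 * t)) ` {t. 2 * t < length xs}"
    by (auto elim!: evenE)
  moreover have "{t. 2 * t < length xs} = {..< (length xs + 1) div 2}"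
    by auto
  moreover have "inj_on (\<lambda>t. xs ! (2 * t)) {t. 2 * t < length xs}"
    using assms by (auto simp: inj_on_def nth_eq_iff_index_eq)
  ultimately show ?thesis
    by (simp add: card_image)
qed

lemma representatives_inj_on:
  assumes "S \<subseteq> gsccs d \<sigma> W" "\<forall>X\<in>S. f X \<in> X"
  shows "inj_on f S"
proof (rule inj_onI)
  fix X Y assume XY: "X \<in> S" "Y \<in> S" "f X = f Y"
  then have "f X \<in> X" "f X \<in> Y"
    using assms(2) by auto
  then show "X = Y"
    using XY(1,2) assms(1) gsccs_disjoint[of X d \<sigma> W Y "f X"] by blast
qed

lemma separated_if_no_garc:
  "I \<subseteq> W \<Longrightarrow> \<forall>x\<in>I. \<forall>y\<in>I. \<not> garc d \<sigma> W x y \<Longrightarrow> separated d \<sigma> I"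
  unfolding separated_def garc_def by (meson not_less subsetD)

lemma chordless_dicycle_even_no_garc:
  assumes "chordless_dicycle d \<sigma> W C" "i < length C" "j < length C" "even i" "even j" "i \<noteq> j"
    "{i, j} \<noteq> {0, length C - 1}"
  shows "\<not> garc d \<sigma> W (C ! i) (C ! j)"
proof -
  have not_next: "b \<noteq> (a + 1) mod length C"
    if "a < length C" "b < length C" "even a" "even b" "{a, b} \<noteq> {0, length C - 1}" for a b
  proof (cases "a + 1 < length C")
    case True
    then show ?thesis
      using that(3,4) by auto
  next
    case False
    then have "a + 1 = length C"
      using that(1) by simp
    then have "a = length C - 1" "(a + 1) mod length C = 0"
      by simp_all
    then show ?thesis
      using that(5) by auto
  qed
  have "j \<noteq> (i + 1) mod length C" "i \<noteq> (j + 1) mod length C"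
    using not_next[of i j] not_next[of j i] assms(2-5,7) by (simp_all add: insert_commute)
  then show ?thesis
    using assms(1-3,6) unfolding chordless_dicycle_def by blast
qed

lemma chordless_dicycle_evens_dmin:
  assumes ch: "chordless_dicycle d \<sigma> W C"
    and xy: "x \<in> {C ! i | i. i < length C \<and> even i}" "y \<in> {C ! i | i. i < length C \<and> even i}"
      "x \<noteq> y" "{x, y} \<noteq> {C ! 0, C ! (length C - 1)}"
  shows "\<sigma> \<le> dmin d x y"
proof -
  obtain i j where ij: "x = C ! i" "y = C ! j" "i < length C" "j < length C" "even i" "even j"
    using xy(1,2) by auto
  have "i \<noteq> j"
    using xy(3) ij by auto
  moreover have "{i, j} \<noteq> {0, length C - 1}"
  proof
    assume "{i, j} = {0, length C - 1}"
    then have "(!) C ` {i, j} = (!) C ` {0, length C - 1}"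
      by simp
    then show False
      using xy(4) ij(1,2) by simp
  qed
  moreover have "{j, i} \<noteq> {0, length C - 1}"
    using calculation(2) by (simp add: insert_commute)
  ultimately have "\<not> garc d \<sigma> W x y" "\<not> garc d \<sigma> W y x"
    using chordless_dicycle_even_no_garc[OF ch ij(3,4,5,6)]
      chordless_dicycle_even_no_garc[OF ch ij(4,3,6,5)] ij(1,2) by auto
  moreover have "x \<in> W" "y \<in> W"
    using ch ij by (auto simp: chordless_dicycle_def dicycle_def)
  ultimately show ?thesis
    using xy(3) by (auto simp: dmin_def garc_def)
qed

lemma cantichain_representatives_separated:
  assumes M: "cantichain d \<sigma> W M" and f: "\<forall>X\<in>M. f X \<in> X"
  shows "separated d \<sigma> (f ` M)"
proof (rule separated_if_no_garc)
  show "f ` M \<subseteq> W"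
  proof
    fix x assume "x \<in> f ` M"
    then obtain X where "X \<in> M" "x = f X"
      by blast
    then have "X \<in> gsccs d \<sigma> W" "x \<in> X"
      using M f by (auto simp: cantichain_def)
    then show "x \<in> W"
      using gsccs_subset by blast
  qed
  show "\<forall>x\<in>f ` M. \<forall>y\<in>f ` M. \<not> garc d \<sigma> W x y"
  proof (intro ballI notI)
    fix x y assume "x \<in> f ` M" "y \<in> f ` M" and arc: "garc d \<sigma> W x y"
    then obtain X Y where XY: "X \<in> M" "Y \<in> M" "x = f X" "y = f Y"
      by blast
    then have "X \<noteq> Y"
      using arc by (auto simp: garc_def)
    moreover have "creach d \<sigma> W X Y"
      using XY f garc_imp_greach[OF arc] unfolding creach_def by blast
    ultimately show False
      using M XY(1,2) unfolding cantichain_def by blast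
  qed
qed

lemma shortest_cpath_even_no_garc:
  assumes sp: "shortest_cpath d \<sigma> W L" and ij: "i < j" "j < length L" "even i" "even j"
    and x: "x \<in> L ! i" and y: "y \<in> L ! j"
  shows "\<not> garc d \<sigma> W x y" "\<not> garc d \<sigma> W y x"
proof -
  have cp: "cpath d \<sigma> W L"
    using sp by (simp add: shortest_cpath_def)
  have distinct: "L ! i \<noteq> L ! j"
    using cp ij by (simp add: cpath_def nth_eq_iff_index_eq)
  have comps: "L ! i \<in> gsccs d \<sigma> W" "L ! j \<in> gsccs d \<sigma> W"
    using cp ij by (auto simp: cpath_def)
  show "\<not> garc d \<sigma> W x y"
  proof
    assume "garc d \<sigma> W x y"
    then have "carc d \<sigma> W (L ! i) (L ! j)"
      using x y distinct by (auto simp: carc_def)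
    moreover have "Suc i < j"
      using ij by (metis Suc_lessI even_Suc)
    ultimately show False
      using shortest_cpath_no_shortcut[OF sp _ ij(2)] by blast
  qed
  show "\<not> garc d \<sigma> W y x"
  proof
    assume yx: "garc d \<sigma> W y x"
    have "greach d \<sigma> W x y"
      using cpath_greach[OF cp _ ij(2) x y] ij by simp
    moreover have "greach d \<sigma> W y x"
      using yx by (rule garc_imp_greach)
    moreover have "y \<in> W"
      using yx by (simp add: garc_def)
    ultimately have "y \<in> gscc d \<sigma> W x"
      by (simp add: gscc_def)
    then have "y \<in> L ! i"
      using gsccs_eq_gscc[OF comps(1) x] by simp
    then have "L ! j = L ! i"
      using gsccs_disjoint[OF comps _ y] by simp
    then show False
      using distinct by simp
  qed
qed

lemma shortest_cpath_representatives_separated: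
  assumes sp: "shortest_cpath d \<sigma> W L" and f: "\<forall>X\<in>set L. f X \<in> X"
  shows "separated d \<sigma> (f ` {L ! i | i. i < length L \<and> even i})"
proof (rule separated_if_no_garc)
  have rep: "f (L ! i) \<in> L ! i" "L ! i \<in> gsccs d \<sigma> W" if "i < length L" for i
    using that f sp by (auto simp: shortest_cpath_def cpath_def)
  show "f ` {L ! i | i. i < length L \<and> even i} \<subseteq> W"
    using rep gsccs_subset by blast
  have no_arc: "\<not> garc d \<sigma> W (f (L ! i)) (f (L ! j))"
    if ij: "i < length L" "j < length L" "even i" "even j" for i j
  proof (cases i j rule: linorder_cases)
    case less
    show ?thesis
      by (rule shortest_cpath_even_no_garc(1)[OF sp less ij(2-4) rep(1)[OF ij(1)] rep(1)[OF ij(2)]])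
  next
    case equal
    then show ?thesis
      by (simp add: garc_def)
  next
    case greater
    show ?thesis
      by (rule shortest_cpath_even_no_garc(2)[OF sp greater ij(1) ij(4,3) rep(1)[OF ij(2)] rep(1)[OF ij(1)]])
  qed
  show "\<forall>x\<in>f ` {L ! i | i. i < length L \<and> even i}. \<forall>y\<in>f ` {L ! i | i. i < length L \<and> even i}.
      \<not> garc d \<sigma> W x y"
    using no_arc by blast
qed

section \<open>Extract\<close>

lemma valid_L_length_le:
  assumes "valid_L d \<sigma> W k L" "0 < k"
  shows "length L \<le> 2 * k"
proof (rule ccontr)
  assume "\<not> length L \<le> 2 * k"
  then have "shortest_cpath d \<sigma> W (take (2 * k) L)" "length (take (2 * k) L) = 2 * k"
    using assms shortest_cpath_take[of d \<sigma> W L "2 * k"] by (auto simp: valid_L_def)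
  then have "\<exists>Q. shortest_cpath d \<sigma> W Q \<and> length Q = 2 * k"
    by blast
  then have "length L = 2 * k"
    using assms(1) unfolding valid_L_def by blast
  then show False
    using \<open>\<not> length L \<le> 2 * k\<close> by simp
qed

lemma max_cantichain_exists:
  assumes "finite W"
  shows "\<exists>M. max_cantichain d \<sigma> W M"
proof -
  have "cantichain d \<sigma> W {}"
    by (simp add: cantichain_def)
  moreover have "\<forall>A. cantichain d \<sigma> W A \<longrightarrow> card A < card (gsccs d \<sigma> W) + 1"
    using assms by (auto simp: cantichain_def intro!: card_mono finite_gsccs le_imp_less_Suc)
  ultimately show ?thesis
    unfolding max_cantichain_def by (rule ex_has_greatest_nat)
qed

lemma valid_L_exists:
  assumes "finite W" "W \<noteq> {}"
  shows "\<exists>L. valid_L d \<sigma> W k L"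
proof (cases "\<exists>Q. shortest_cpath d \<sigma> W Q \<and> length Q = 2 * k")
  case False
  obtain w where "w \<in> W"
    using assms(2) by blast
  then have "cpath d \<sigma> W [gscc d \<sigma> W w]"
    by (simp add: cpath_def gsccs_def)
  then have "shortest_cpath d \<sigma> W [gscc d \<sigma> W w]"
    unfolding shortest_cpath_def by (auto simp: cpath_def Suc_le_eq)
  moreover have "\<forall>Q. shortest_cpath d \<sigma> W Q \<longrightarrow> length Q < card (gsccs d \<sigma> W) + 1"
  proof (intro allI impI)
    fix Q assume "shortest_cpath d \<sigma> W Q"
    then have "length Q = card (set Q)" "set Q \<subseteq> gsccs d \<sigma> W"
      by (auto simp: shortest_cpath_def cpath_def distinct_card)
    then show "length Q < card (gsccs d \<sigma> W) + 1"
      using card_mono[OF finite_gsccs[OF assms(1)]] by (metis le_imp_less_Suc Suc_eq_plus1)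
  qed
  ultimately obtain L where "shortest_cpath d \<sigma> W L"
    "\<forall>Q. shortest_cpath d \<sigma> W Q \<longrightarrow> length Q \<le> length L"
    using ex_has_greatest_nat[of "shortest_cpath d \<sigma> W" _ length] by blast
  then show ?thesis
    using False unfolding valid_L_def by blast
qed (auto simp: valid_L_def)

definition extract_candidates :: "('a \<Rightarrow> 'a \<Rightarrow> real) \<Rightarrow> 'a set \<Rightarrow> real \<Rightarrow> nat \<Rightarrow> 'a set \<Rightarrow> bool" where
  "extract_candidates d W \<sigma> k I \<longleftrightarrow> (\<exists>C M L.
     (has_dicycle d \<sigma> W \<longrightarrow> chordless_dicycle d \<sigma> W C) \<and>
     max_cantichain d \<sigma> W M \<and> valid_L d \<sigma> W k L \<and>
     (if has_dicycle d \<sigma> W \<and> int (length C) \<ge> 2 * int (card M) - 1 \<and> length C \<ge> length L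
      then I = {C ! i | i. i < length C \<and> even i}
      else if 2 * int (card M) - 1 \<ge> int (length L)
      then (\<exists>f. (\<forall>X\<in>M. f X \<in> X) \<and> I = f ` M)
      else (\<exists>f. (\<forall>X\<in>set L. f X \<in> X) \<and> I = f ` {L ! i | i. i < length L \<and> even i})))"

lemma extract_result_iff:
  "extract_result d W \<sigma> k res \<longleftrightarrow> (\<exists>I. extract_candidates d W \<sigma> k I \<and>
     (if k \<le> card I then \<exists>g. greedy d I k g \<and> res = Some (set g) else res = None))"
  unfolding extract_result_def extract_candidates_def by blast

lemma extract_candidatesE:
  assumes "extract_candidates d W \<sigma> k I"
  obtains (cycle) C M L where "chordless_dicycle d \<sigma> W C" "max_cantichain d \<sigma> W M"
      "valid_L d \<sigma> W k L" "2 * int (card M) - 1 \<le> int (length C)" "length L \<le> length C"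
      "I = {C ! i | i. i < length C \<and> even i}"
  | (antichain) M L f where "max_cantichain d \<sigma> W M" "valid_L d \<sigma> W k L"
      "has_dicycle d \<sigma> W \<Longrightarrow>
         \<exists>C. dicycle d \<sigma> W C \<and> (int (length C) < 2 * int (card M) - 1 \<or> length C < length L)"
      "int (length L) \<le> 2 * int (card M) - 1" "\<forall>X\<in>M. f X \<in> X" "I = f ` M"
  | (path) M L f where "max_cantichain d \<sigma> W M" "valid_L d \<sigma> W k L"
      "has_dicycle d \<sigma> W \<Longrightarrow>
         \<exists>C. dicycle d \<sigma> W C \<and> (int (length C) < 2 * int (card M) - 1 \<or> length C < length L)"
      "2 * int (card M) - 1 < int (length L)" "\<forall>X\<in>set L. f X \<in> X"
      "I = f ` {L ! i | i. i < length L \<and> even i}"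
proof -
  obtain C M L where C: "has_dicycle d \<sigma> W \<longrightarrow> chordless_dicycle d \<sigma> W C"
    and M: "max_cantichain d \<sigma> W M" and L: "valid_L d \<sigma> W k L"
    and choice: "if has_dicycle d \<sigma> W \<and> int (length C) \<ge> 2 * int (card M) - 1 \<and> length C \<ge> length L
      then I = {C ! i | i. i < length C \<and> even i}
      else if 2 * int (card M) - 1 \<ge> int (length L)
      then (\<exists>f. (\<forall>X\<in>M. f X \<in> X) \<and> I = f ` M)
      else (\<exists>f. (\<forall>X\<in>set L. f X \<in> X) \<and> I = f ` {L ! i | i. i < length L \<and> even i})"
    using assms unfolding extract_candidates_def by blast
  show thesis
  proof (cases "has_dicycle d \<sigma> W \<and> int (length C) \<ge> 2 * int (card M) - 1 \<and> length C \<ge> length L")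
    case True
    then show thesis
      using C M L choice by (intro cycle) auto
  next
    case not_cycle: False
    then have short_cycle: "\<exists>C. dicycle d \<sigma> W C \<and> (int (length C) < 2 * int (card M) - 1 \<or> length C < length L)"
      if "has_dicycle d \<sigma> W"
      using C that by (auto simp: chordless_dicycle_def)
    show thesis
    proof (cases "2 * int (card M) - 1 \<ge> int (length L)")
      case True
      then obtain f where "\<forall>X\<in>M. f X \<in> X" "I = f ` M"
        using choice not_cycle by auto
      then show thesis
        using M L short_cycle True by (intro antichain) auto
    next
      case False
      then obtain f where "\<forall>X\<in>set L. f X \<in> X" "I = f ` {L ! i | i. i < length L \<and> even i}"
        using choice not_cycle by auto
      then show thesis
        using M L short_cycle False by (intro path) auto
    qed
  qed
qed

lemma extract_candidates_exist:
  assumes "finite W" "W \<noteq> {}"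
  shows "\<exists>I. extract_candidates d W \<sigma> k I"
proof -
  obtain C where C: "has_dicycle d \<sigma> W \<longrightarrow> chordless_dicycle d \<sigma> W C"
    using chordless_dicycle_exists by blast
  obtain M where M: "max_cantichain d \<sigma> W M"
    using max_cantichain_exists[OF assms(1)] by blast
  obtain L where L: "valid_L d \<sigma> W k L"
    using valid_L_exists[OF assms] by blast
  have "\<exists>f. \<forall>X\<in>S. f X \<in> X" if "S \<subseteq> gsccs d \<sigma> W" for S
    using that gsccs_nonempty by (intro bchoice) blast
  moreover have "M \<subseteq> gsccs d \<sigma> W" "set L \<subseteq> gsccs d \<sigma> W"
    using M L by (auto simp: max_cantichain_def cantichain_def valid_L_def shortest_cpath_def cpath_def)
  ultimately obtain fM fL where fM: "\<forall>X\<in>M. fM X \<in> X" and fL: "\<forall>X\<in>set L. fL X \<in> X"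
    by meson
  define I where "I = (if has_dicycle d \<sigma> W \<and> int (length C) \<ge> 2 * int (card M) - 1 \<and> length C \<ge> length L
      then {C ! i | i. i < length C \<and> even i}
      else if 2 * int (card M) - 1 \<ge> int (length L)
      then fM ` M else fL ` {L ! i | i. i < length L \<and> even i})"
  have "extract_candidates d W \<sigma> k I"
    unfolding extract_candidates_def I_def using C M L fM fL
    by (intro exI[of _ C] exI[of _ M] exI[of _ L]) auto
  then show ?thesis ..
qed

lemma extract_candidates_subset:
  assumes "extract_candidates d W \<sigma> k I"
  shows "I \<subseteq> W"
  using assms
proof (cases rule: extract_candidatesE)
  case (cycle C M L)
  have "set C \<subseteq> W"
    using cycle(1) by (simp add: chordless_dicycle_def dicycle_def)
  then show ?thesis
    using cycle(6) by auto
next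
  case (antichain M L f)
  have "M \<subseteq> gsccs d \<sigma> W"
    using antichain(1) by (simp add: max_cantichain_def cantichain_def)
  show ?thesis
  proof
    fix x assume "x \<in> I"
    then obtain X where "X \<in> M" "x = f X"
      using antichain(6) by blast
    then have "X \<in> gsccs d \<sigma> W" "x \<in> X"
      using \<open>M \<subseteq> gsccs d \<sigma> W\<close> antichain(5) by auto
    then show "x \<in> W"
      using gsccs_subset by blast
  qed
next
  case (path M L f)
  have "set L \<subseteq> gsccs d \<sigma> W"
    using path(2) by (simp add: valid_L_def shortest_cpath_def cpath_def)
  show ?thesis
  proof
    fix x assume "x \<in> I"
    then obtain i where "i < length L" "x = f (L ! i)"
      using path(6) by auto
    then have "L ! i \<in> gsccs d \<sigma> W" "x \<in> L ! i"
      using \<open>set L \<subseteq> gsccs d \<sigma> W\<close> path(5) by auto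
    then show "x \<in> W"
      using gsccs_subset by blast
  qed
qed

lemma extract_candidates_greedy_separated:
  assumes girth: "\<And>cs. dicycle d \<sigma> W cs \<Longrightarrow> 2 * k + 1 \<le> length cs"
    and I: "extract_candidates d W \<sigma> k I" and gr: "greedy d I k g"
  shows "separated d \<sigma> (set g)"
proof -
  have "set g \<subseteq> I"
    using gr by (simp add: greedy_def)
  from I show ?thesis
  proof (cases rule: extract_candidatesE)
    case (cycle C M L)
    have C: "dicycle d \<sigma> W C" "distinct C"
      using cycle(1) by (auto simp: chordless_dicycle_def dicycle_def)
    have "k < (length C + 1) div 2"
      using girth[OF C(1)] by presburger
    then have "k < card I"
      using card_even_nths[OF C(2)] cycle(6) by simp
    moreover have "finite I"
      using cycle(6) by simp
    moreover have "\<forall>x\<in>I. \<forall>y\<in>I. x \<noteq> y \<and> {x, y} \<noteq> {C ! 0, C ! (length C - 1)} \<longrightarrow> \<sigma> \<le> dmin d x y"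
      using chordless_dicycle_evens_dmin[OF cycle(1)] cycle(6) by blast
    ultimately show ?thesis
      using greedy_separated_but_one_pair[OF gr] by (simp add: separated_dmin_iff)
  next
    case (antichain M L f)
    have "cantichain d \<sigma> W M"
      using antichain(1) by (simp add: max_cantichain_def)
    then have "separated d \<sigma> I"
      using cantichain_representatives_separated[OF _ antichain(5)] antichain(6) by simp
    then show ?thesis
      using separated_subset \<open>set g \<subseteq> I\<close> by blast
  next
    case (path M L f)
    have "shortest_cpath d \<sigma> W L"
      using path(2) by (simp add: valid_L_def)
    then have "separated d \<sigma> I"
      using shortest_cpath_representatives_separated[OF _ path(5)] path(6) by simp
    then show ?thesis
      using separated_subset \<open>set g \<subseteq> I\<close> by blast
  qed
qed

text \<open>When Extract does not use the cycle, one of the other two candidates is large: the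
  girth bound makes any cycle longer than L, and an acyclic G has a wide antichain or a long
  shortest path.\<close>
lemma extract_noncycle_bound:
  assumes girth: "\<And>cs. dicycle d \<sigma> W cs \<Longrightarrow> 2 * k + 1 \<le> length cs" and "0 < k"
    and wide: "\<not> has_dicycle d \<sigma> W \<Longrightarrow>
      (\<exists>A. cantichain d \<sigma> W A \<and> k \<le> card A) \<or> (\<exists>P. shortest_cpath d \<sigma> W P \<and> length P = 2 * k)"
    and M: "max_cantichain d \<sigma> W M" and L: "valid_L d \<sigma> W k L"
    and short_cycle: "has_dicycle d \<sigma> W \<Longrightarrow>
      \<exists>C. dicycle d \<sigma> W C \<and> (int (length C) < 2 * int (card M) - 1 \<or> length C < length L)"
  shows "2 * k \<le> max (2 * card M) (length L + 1)"
proof (cases "has_dicycle d \<sigma> W")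
  case True
  then obtain C where cyc: "dicycle d \<sigma> W C"
    and C: "int (length C) < 2 * int (card M) - 1 \<or> length C < length L"
    using short_cycle by blast
  have "2 * k + 1 \<le> length C"
    by (rule girth[OF cyc])
  moreover have "length L \<le> 2 * k"
    by (rule valid_L_length_le[OF L \<open>0 < k\<close>])
  ultimately have "2 * k \<le> 2 * card M"
    using C by linarith
  then show ?thesis
    by simp
next
  case False
  then consider A where "cantichain d \<sigma> W A" "k \<le> card A"
    | P where "shortest_cpath d \<sigma> W P" "length P = 2 * k"
    using wide by blast
  then show ?thesis
  proof cases
    case 1
    then have "card A \<le> card M"
      using M by (simp add: max_cantichain_def)
    then show ?thesis
      using 1(2) by simp
  next
    case 2
    then have "length L = 2 * k"
      using L unfolding valid_L_def by blast
    then show ?thesis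
      by simp
  qed
qed

lemma extract_candidates_card:
  assumes girth: "\<And>cs. dicycle d \<sigma> W cs \<Longrightarrow> 2 * k + 1 \<le> length cs" and "0 < k"
    and wide: "\<not> has_dicycle d \<sigma> W \<Longrightarrow>
      (\<exists>A. cantichain d \<sigma> W A \<and> k \<le> card A) \<or> (\<exists>P. shortest_cpath d \<sigma> W P \<and> length P = 2 * k)"
    and I: "extract_candidates d W \<sigma> k I"
  shows "k \<le> card I"
  using I
proof (cases rule: extract_candidatesE)
  case (cycle C M L)
  have C: "dicycle d \<sigma> W C" "distinct C"
    using cycle(1) by (auto simp: chordless_dicycle_def dicycle_def)
  have "k \<le> (length C + 1) div 2"
    using girth[OF C(1)] by presburger
  then show ?thesis
    using card_even_nths[OF C(2)] cycle(6) by simp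
next
  case (antichain M L f)
  have "2 * k \<le> max (2 * card M) (length L + 1)"
    by (rule extract_noncycle_bound[OF girth \<open>0 < k\<close> wide antichain(1-3)])
  moreover have "length L + 1 \<le> 2 * card M"
    using antichain(4) by linarith
  moreover have "M \<subseteq> gsccs d \<sigma> W"
    using antichain(1) by (simp add: max_cantichain_def cantichain_def)
  then have "card I = card M"
    using card_image[OF representatives_inj_on[OF _ antichain(5)]] antichain(6) by simp
  ultimately show ?thesis
    by (simp add: max_absorb1)
next
  case (path M L f)
  have "2 * k \<le> max (2 * card M) (length L + 1)"
    by (rule extract_noncycle_bound[OF girth \<open>0 < k\<close> wide path(1-3)])
  moreover have "2 * card M \<le> length L + 1"
    using path(4) by linarith
  ultimately have "k \<le> (length L + 1) div 2"
    by (simp add: max_absorb2)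
  moreover have "card I = (length L + 1) div 2"
  proof -
    have L: "distinct L" "set L \<subseteq> gsccs d \<sigma> W"
      using path(2) by (auto simp: valid_L_def shortest_cpath_def cpath_def)
    have "inj_on f {L ! i | i. i < length L \<and> even i}"
      using representatives_inj_on[OF L(2) path(5)] by (rule inj_on_subset) auto
    then show ?thesis
      using card_even_nths[OF L(1)] path(6) by (simp add: card_image)
  qed
  ultimately show ?thesis
    by simp
qed

lemma extract_result_exists:
  assumes "finite W" "W \<noteq> {}"
  shows "\<exists>res. extract_result d W \<sigma> k res"
proof -
  obtain I where I: "extract_candidates d W \<sigma> k I"
    using extract_candidates_exist[OF assms] by blast
  have "finite I"
    using extract_candidates_subset[OF I] assms(1) by (rule finite_subset)
  show ?thesis
  proof (cases "k \<le> card I")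
    case True
    then obtain g where g: "greedy d I k g"
      using greedy_exists[OF \<open>finite I\<close>] by blast
    have "extract_result d W \<sigma> k (Some (set g))"
      unfolding extract_result_iff using I True g by (intro exI[of _ I]) auto
    then show ?thesis ..
  next
    case False
    then have "extract_result d W \<sigma> k None"
      unfolding extract_result_iff using I by (intro exI[of _ I]) simp
    then show ?thesis ..
  qed
qed

lemma extract_result_SomeD:
  assumes girth: "\<And>cs. dicycle d \<sigma> W cs \<Longrightarrow> 2 * k + 1 \<le> length cs"
    and "extract_result d W \<sigma> k (Some S)"
  shows "S \<subseteq> W" "card S = k" "separated d \<sigma> S"
proof -
  obtain I where I: "extract_candidates d W \<sigma> k I"
    and sel: "if k \<le> card I then \<exists>g. greedy d I k g \<and> Some S = Some (set g) else Some S = None"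
    using assms(2) unfolding extract_result_iff by blast
  then have "k \<le> card I"
    by (cases "k \<le> card I") simp_all
  then obtain g where g: "greedy d I k g" "S = set g"
    using sel by auto
  then show "S \<subseteq> W" "card S = k"
    using extract_candidates_subset[OF I] by (auto simp: greedy_def distinct_card)
  show "separated d \<sigma> S"
    using extract_candidates_greedy_separated[OF girth I g(1)] g(2) by simp
qed

lemma extract_result_not_None:
  assumes girth: "\<And>cs. dicycle d \<sigma> W cs \<Longrightarrow> 2 * k + 1 \<le> length cs" and "0 < k"
    and wide: "\<not> has_dicycle d \<sigma> W \<Longrightarrow>
      (\<exists>A. cantichain d \<sigma> W A \<and> k \<le> card A) \<or> (\<exists>P. shortest_cpath d \<sigma> W P \<and> length P = 2 * k)"
    and "extract_result d W \<sigma> k res"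
  shows "res \<noteq> None"
proof -
  obtain I where I: "extract_candidates d W \<sigma> k I"
    and sel: "if k \<le> card I then \<exists>g. greedy d I k g \<and> res = Some (set g) else res = None"
    using assms(4) unfolding extract_result_iff by blast
  moreover have "k \<le> card I"
    by (rule extract_candidates_card[OF girth \<open>0 < k\<close> wide I])
  ultimately show ?thesis
    by auto
qed

section \<open>Cluster\<close>

lemma cluster_run_exists:
  assumes "finite Unm" "\<forall>u\<in>Unm. d u u = 0" "0 < R"
  shows "\<exists>F. cluster_run d R Unm Out F"
  using assms(1,2)
proof (induction "card Unm" arbitrary: Unm Out rule: less_induct)
  case less
  show ?case
  proof (cases "Unm = {}")
    case True
    then show ?thesis
      using cluster_run.stop by blast
  next
    case False
    then obtain c where c: "c \<in> Unm"
      by blast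
    define Unm' where "Unm' = Unm - {v \<in> Unm. dmax d c v < R}"
    have "dmax d c c < R"
      using less.prems(2) c \<open>0 < R\<close> by (simp add: dmax_def)
    then have "Unm' \<subset> Unm"
      using c by (auto simp: Unm'_def)
    then have "card Unm' < card Unm" "finite Unm'" "\<forall>u\<in>Unm'. d u u = 0"
      using less.prems by (auto intro: psubset_card_mono simp: Unm'_def)
    then obtain F where "cluster_run d R Unm' (insert c Out) F"
      using less.hyps by blast
    then show ?thesis
      using cluster_run.step[OF c] unfolding Unm'_def by blast
  qed
qed

lemma dmax_commute: "dmax d x y = dmax d y x"
  by (simp add: dmax_def max.commute)

lemma separated_dmax_insert:
  assumes "separated (dmax d) r S" "\<forall>z\<in>S. r \<le> dmax d z c"
  shows "separated (dmax d) r (insert c S)"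
  unfolding separated_def
proof (intro ballI impI)
  fix x y assume "x \<in> insert c S" "y \<in> insert c S" "x \<noteq> y"
  then consider "x \<in> S" "y \<in> S" | "x = c" "y \<in> S" | "x \<in> S" "y = c"
    by blast
  then show "r \<le> dmax d x y"
  proof cases
    case 1
    then show ?thesis
      using assms(1) \<open>x \<noteq> y\<close> by (simp add: separated_def)
  next
    case 2
    then have "r \<le> dmax d y x"
      using assms(2) by simp
    then show ?thesis
      by (simp add: dmax_commute)
  next
    case 3
    then show ?thesis
      using assms(2) by simp
  qed
qed

lemma cluster_run_invariant:
  assumes "cluster_run d R Unm Out F"
  shows "separated (dmax d) R Out \<Longrightarrow> \<forall>z\<in>Out. \<forall>u\<in>Unm. R \<le> dmax d z u \<Longrightarrow>
    F \<subseteq> Out \<union> Unm \<and> Out \<subseteq> F \<and> separated (dmax d) R F \<and> (\<forall>u\<in>Unm. \<exists>c\<in>F. dmax d c u < R)"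
  using assms
proof (induction rule: cluster_run.induct)
  case (step c Unm Out F)
  define Unm' where "Unm' = Unm - {v \<in> Unm. dmax d c v < R}"
  have "separated (dmax d) R (insert c Out)"
    using step.prems step.hyps(1) by (intro separated_dmax_insert) blast+
  moreover have "\<forall>z\<in>insert c Out. \<forall>u\<in>Unm'. R \<le> dmax d z u"
    using step.prems(2) by (auto simp: Unm'_def)
  ultimately have IH: "F \<subseteq> insert c Out \<union> Unm'" "insert c Out \<subseteq> F" "separated (dmax d) R F"
    "\<forall>u\<in>Unm'. \<exists>c\<in>F. dmax d c u < R"
    using step.IH unfolding Unm'_def by simp_all
  have "\<exists>c'\<in>F. dmax d c' u < R" if "u \<in> Unm" for u
  proof (cases "dmax d c u < R")
    case True
    then show ?thesis
      using IH(2) by blast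
  next
    case False
    then have "u \<in> Unm'"
      using that by (simp add: Unm'_def)
    then show ?thesis
      using IH(4) by blast
  qed
  moreover have "F \<subseteq> Out \<union> Unm"
    using IH(1) step.hyps(1) by (auto simp: Unm'_def)
  ultimately show ?case
    using IH(2,3) by blast
qed simp

lemma cluster_result_exists:
  assumes "asym_pseudometric U d" "0 < R"
  shows "\<exists>W. cluster_result d U R W"
  using cluster_run_exists[of U d R "{}"] asym_pseudometricD(1,2)[OF assms(1)] assms(2)
  by (simp add: cluster_result_def)

lemma cluster_resultD:
  assumes "cluster_result d U R W"
  shows "W \<subseteq> U" "separated (dmax d) R W" "\<forall>u\<in>U. \<exists>c\<in>W. dmax d c u < R"
  using cluster_run_invariant[OF assms[unfolded cluster_result_def]] by (simp_all add: separated_def)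

lemma cluster_result_girth:
  assumes pm: "asym_pseudometric U d" and W: "cluster_result d U R W" and "0 < R" "0 < k"
    and "dicycle d (R / (2 * real k)) W cs"
  shows "2 * k + 1 \<le> length cs"
proof -
  have "0 < R / (2 * real k)"
    using assms(3,4) by simp
  moreover have "separated (dmax d) (2 * real k * (R / (2 * real k))) W"
    using cluster_resultD(2)[OF W] \<open>0 < k\<close> by simp
  ultimately show ?thesis
    using dicycle_length_if_separated[OF pm cluster_resultD(1)[OF W]] assms(5) by blast
qed

text \<open>Distances below R0 are below R*/3, so each optimal point is within R*/3 of its centre in both
  directions; by the triangle inequality two centres are then more than R*/3, hence at least R0,
  apart.\<close>
lemma centres_separated:
  assumes pm: "asym_pseudometric U d" and WU: "W \<subseteq> U"
    and Opt: "Opt \<subseteq> U" "separated d Rs Opt" "0 < Rs"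
    and gap: "\<And>x y. x \<in> U \<Longrightarrow> y \<in> U \<Longrightarrow> x \<noteq> y \<Longrightarrow> d x y < R0 \<Longrightarrow> d x y < Rs / 3"
    and cf: "\<And>z. z \<in> Opt \<Longrightarrow> cf z \<in> W \<and> dmax d (cf z) z < R0"
  shows "inj_on cf Opt" "separated d R0 (cf ` Opt)"
proof -
  have near: "d z (cf z) < Rs / 3 \<and> d (cf z) z < Rs / 3" if "z \<in> Opt" for z
  proof (cases "cf z = z")
    case True
    then show ?thesis
      using asym_pseudometricD(2)[OF pm] that Opt(1,3) by auto
  next
    case False
    have "z \<in> U" "cf z \<in> U"
      using cf[OF that] that Opt(1) WU by auto
    then show ?thesis
      using gap[of z "cf z"] gap[of "cf z" z] cf[OF that] False by (auto simp: dmax_def)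
  qed
  have far: "cf z1 \<noteq> cf z2 \<and> R0 \<le> d (cf z1) (cf z2)" if "z1 \<in> Opt" "z2 \<in> Opt" "z1 \<noteq> z2" for z1 z2
  proof -
    have in_U: "z1 \<in> U" "z2 \<in> U" "cf z1 \<in> U" "cf z2 \<in> U"
      using that Opt(1) cf WU by auto
    have "Rs \<le> d z1 z2"
      using Opt(2) that by (simp add: separated_def)
    also have "\<dots> \<le> d z1 (cf z1) + d (cf z1) (cf z2) + d (cf z2) z2"
      using asym_pseudometricD(3)[OF pm] in_U by (smt (verit))
    finally have "Rs \<le> d z1 (cf z1) + d (cf z1) (cf z2) + d (cf z2) z2" .
    moreover have "d z1 (cf z1) < Rs / 3" "d (cf z2) z2 < Rs / 3"
      using near that(1,2) by auto
    ultimately have "Rs / 3 < d (cf z1) (cf z2)"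
      by linarith
    moreover have "cf z1 \<noteq> cf z2"
      using calculation asym_pseudometricD(2)[OF pm] in_U Opt(3) by force
    ultimately show ?thesis
      using gap in_U by force
  qed
  show "inj_on cf Opt"
    using far by (meson inj_onI)
  show "separated d R0 (cf ` Opt)"
    using far by (auto simp: separated_def)
qed

lemma cluster_result_antichain_or_shortest_cpath:
  assumes pm: "asym_pseudometric U d" and W: "cluster_result d U R0 W" and "0 < R0" "0 < k"
    and Opt: "Opt \<subseteq> U" "card Opt = k" "separated d Rs Opt" "0 < Rs"
    and gap: "\<And>x y. x \<in> U \<Longrightarrow> y \<in> U \<Longrightarrow> x \<noteq> y \<Longrightarrow> d x y < R0 \<Longrightarrow> d x y < Rs / 3"
    and dag: "\<not> has_dicycle d (R0 / (2 * real k)) W"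
  shows "(\<exists>A. cantichain d (R0 / (2 * real k)) W A \<and> k \<le> card A) \<or>
    (\<exists>P. shortest_cpath d (R0 / (2 * real k)) W P \<and> length P = 2 * k)"
proof -
  have WU: "W \<subseteq> U"
    by (rule cluster_resultD(1)[OF W])
  obtain cf where cf: "\<And>z. z \<in> Opt \<Longrightarrow> cf z \<in> W \<and> dmax d (cf z) z < R0"
    using cluster_resultD(3)[OF W] Opt(1) by (metis subsetD)
  note centres = centres_separated[OF pm WU Opt(1,3,4) gap cf]
  have "cf ` Opt \<subseteq> W" "card (cf ` Opt) = k"
    using cf Opt(2) card_image[OF centres(1)] by auto
  moreover have "separated d (2 * real k * (R0 / (2 * real k))) (cf ` Opt)"
    using centres(2) \<open>0 < k\<close> by simp
  ultimately show ?thesis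
    using acyclic_antichain_or_shortest_cpath[OF pm WU _ \<open>0 < k\<close> dag] \<open>0 < R0\<close> \<open>0 < k\<close> by simp
qed

section \<open>BAC\<close>

lemma finite_bac_radii: "finite U \<Longrightarrow> finite (bac_radii U d)"
proof -
  have "bac_radii U d \<subseteq> (\<lambda>(i, j). d i j) ` (U \<times> U)"
    by (auto simp: bac_radii_def)
  then show "finite U \<Longrightarrow> finite (bac_radii U d)"
    using finite_subset by blast
qed

lemma bac_radii_pos: "R \<in> bac_radii U d \<Longrightarrow> 0 < R"
  by (auto simp: bac_radii_def)

lemma bac_run_exists:
  assumes pm: "asym_pseudometric U d" and "U \<noteq> {}"
  shows "\<exists>Uc out. bac_run U d k Uc out"
proof -
  have "\<exists>p. cluster_result d U R (fst p) \<and> extract_result d (fst p) (R / (2 * real k)) k (snd p)"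
    if R: "R \<in> bac_radii U d" for R
  proof -
    obtain W where W: "cluster_result d U R W"
      using cluster_result_exists[OF pm bac_radii_pos[OF R]] by blast
    have "finite W"
      using cluster_resultD(1)[OF W] asym_pseudometricD(1)[OF pm] finite_subset by blast
    moreover have "W \<noteq> {}"
      using cluster_resultD(3)[OF W] \<open>U \<noteq> {}\<close> by blast
    ultimately obtain res where "extract_result d W (R / (2 * real k)) k res"
      using extract_result_exists by blast
    then show ?thesis
      using W by (intro exI[of _ "(W, res)"]) simp
  qed
  then obtain h where "\<forall>R\<in>bac_radii U d. cluster_result d U R (fst (h R)) \<and>
      extract_result d (fst (h R)) (R / (2 * real k)) k (snd (h R))"
    by metis
  then have "bac_run U d k (\<lambda>R. fst (h R)) (\<lambda>R. snd (h R))"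
    by (simp add: bac_run_def)
  then show ?thesis
    by blast
qed

lemma bac_run_output:
  assumes pm: "asym_pseudometric U d" and "2 \<le> k"
    and run: "bac_run U d k Uc out" and R: "R \<in> bac_radii U d" and S: "out R = Some S"
  shows "S \<subseteq> U" "card S = k" "R / (2 * real k) \<le> diver d S"
proof -
  have W: "cluster_result d U R (Uc R)" and ex: "extract_result d (Uc R) (R / (2 * real k)) k (Some S)"
    using run R S by (auto simp: bac_run_def)
  note girth = cluster_result_girth[OF pm W bac_radii_pos[OF R]]
  have "0 < k"
    using \<open>2 \<le> k\<close> by simp
  show "S \<subseteq> U" "card S = k"
    using extract_result_SomeD(1,2)[OF girth[OF \<open>0 < k\<close>] ex] cluster_resultD(1)[OF W] by auto
  moreover have "finite S"
    using \<open>S \<subseteq> U\<close> asym_pseudometricD(1)[OF pm] finite_subset by blast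
  ultimately show "R / (2 * real k) \<le> diver d S"
    using diver_ge_if_separated[OF _ _ extract_result_SomeD(3)[OF girth[OF \<open>0 < k\<close>] ex]] \<open>2 \<le> k\<close>
    by simp
qed

lemma opt_div_attained:
  assumes "finite U" "k \<le> card U"
  obtains Opt where "Opt \<subseteq> U" "card Opt = k" "diver d Opt = opt_div U d k"
proof -
  let ?D = "{diver d T | T. T \<subseteq> U \<and> card T = k}"
  have "?D \<subseteq> diver d ` Pow U"
    by auto
  then have "finite ?D"
    using assms(1) finite_subset by blast
  moreover obtain T where "T \<subseteq> U" "card T = k"
    using obtain_subset_with_card_n[OF assms(2)] by blast
  then have "?D \<noteq> {}"
    by blast
  ultimately have "opt_div U d k \<in> ?D"
    unfolding opt_div_def by (rule Max_in)
  then obtain Opt where "Opt \<subseteq> U" "card Opt = k" "opt_div U d k = diver d Opt"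
    by blast
  then show thesis
    using that by simp
qed

lemma least_radius_above:
  assumes "finite U" "0 < t" "r \<in> bac_radii U d" "t \<le> r"
  obtains R0 where "R0 \<in> bac_radii U d" "t \<le> R0"
    "\<And>x y. x \<in> U \<Longrightarrow> y \<in> U \<Longrightarrow> x \<noteq> y \<Longrightarrow> d x y < R0 \<Longrightarrow> d x y < t"
proof -
  define A where "A = {r \<in> bac_radii U d. t \<le> r}"
  have "finite A" "A \<noteq> {}"
    using finite_bac_radii[OF assms(1)] assms(3,4) by (auto simp: A_def)
  then have "Min A \<in> A"
    by (rule Min_in)
  moreover have "d x y < t"
    if xy: "x \<in> U" "y \<in> U" "x \<noteq> y" "d x y < Min A" for x y
  proof (rule ccontr)
    assume "\<not> d x y < t"
    then have "0 < d x y"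
      using assms(2) by simp
    then have "d x y \<in> bac_radii U d"
      using xy(1-3) unfolding bac_radii_def by blast
    then have "d x y \<in> A"
      using \<open>\<not> d x y < t\<close> by (simp add: A_def)
    then have "Min A \<le> d x y"
      using \<open>finite A\<close> by (rule Min_le[rotated])
    then show False
      using xy(4) by simp
  qed
  ultimately show thesis
    using that[of "Min A"] by (simp add: A_def)
qed

lemma bac_returns_exists:
  assumes "finite (bac_radii U d)" "R0 \<in> bac_radii U d" "out R0 = Some S0"
  shows "\<exists>S. bac_returns U d out S"
proof -
  let ?succ = "{R \<in> bac_radii U d. out R \<noteq> None}"
  have "finite ?succ" "?succ \<noteq> {}"
    using assms by auto
  then obtain Rm where Rm: "Rm \<in> ?succ"
    and best: "\<And>R. R \<in> ?succ \<Longrightarrow> diver d (the (out R)) \<le> diver d (the (out Rm))"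
    using finite_has_arg_max[where f = "\<lambda>R. diver d (the (out R))"] by blast
  then obtain Sm where "out Rm = Some Sm"
    by blast
  then have "bac_returns U d out Sm"
    unfolding bac_returns_def using Rm best by force
  then show ?thesis ..
qed

text \<open>R0 is the least radius of at least R*/3: at R0 Extract succeeds, and its output is
  R0/(2k)-separated.\<close>
lemma bac_run_succeeds:
  assumes pm: "asym_pseudometric U d" and k: "2 \<le> k" "k \<le> card U" and "0 < opt_div U d k"
    and run: "bac_run U d k Uc out"
  obtains R S where "R \<in> bac_radii U d" "out R = Some S" "opt_div U d k / (6 * real k) \<le> diver d S"
proof -
  define Rs where "Rs = opt_div U d k"
  have finU: "finite U"
    by (rule asym_pseudometricD(1)[OF pm])
  obtain Opt where Opt: "Opt \<subseteq> U" "card Opt = k" "diver d Opt = Rs"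
    using opt_div_attained[OF finU k(2)] unfolding Rs_def by blast
  have "finite Opt"
    using Opt(1) finU finite_subset by blast
  then have sep: "separated d Rs Opt" and "\<exists>u\<in>Opt. \<exists>v\<in>Opt. u \<noteq> v \<and> d u v = Rs"
    using diver_attained[of Opt d] Opt k by auto
  then have "Rs \<in> bac_radii U d"
    using Opt(1) \<open>0 < opt_div U d k\<close> by (force simp: bac_radii_def Rs_def)
  then obtain R0 where R0: "R0 \<in> bac_radii U d" "Rs / 3 \<le> R0"
    and gap: "\<And>x y. x \<in> U \<Longrightarrow> y \<in> U \<Longrightarrow> x \<noteq> y \<Longrightarrow> d x y < R0 \<Longrightarrow> d x y < Rs / 3"
    using least_radius_above[OF finU _ \<open>Rs \<in> bac_radii U d\<close>, of "Rs / 3"] \<open>0 < opt_div U d k\<close>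
    unfolding Rs_def by auto
  have W: "cluster_result d U R0 (Uc R0)"
    and ex: "extract_result d (Uc R0) (R0 / (2 * real k)) k (out R0)"
    using run R0(1) by (auto simp: bac_run_def)
  have "0 < k" "0 < R0"
    using k bac_radii_pos[OF R0(1)] by auto
  have "out R0 \<noteq> None"
    using extract_result_not_None[OF cluster_result_girth[OF pm W \<open>0 < R0\<close> \<open>0 < k\<close>] \<open>0 < k\<close>
        cluster_result_antichain_or_shortest_cpath[OF pm W \<open>0 < R0\<close> \<open>0 < k\<close> Opt(1,2) sep _ gap] ex]
      \<open>0 < opt_div U d k\<close> unfolding Rs_def by blast
  then obtain S where S: "out R0 = Some S"
    by blast
  have "Rs / (6 * real k) \<le> R0 / (2 * real k)"
    using R0(2) \<open>0 < k\<close> by (simp add: field_simps)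
  also have "\<dots> \<le> diver d S"
    by (rule bac_run_output(3)[OF pm k(1) run R0(1) S])
  finally show thesis
    using that R0(1) S unfolding Rs_def by blast
qed

lemma bac_run_correct:
  assumes pm: "asym_pseudometric U d" and k: "2 \<le> k" "k \<le> card U" and "0 < opt_div U d k"
    and run: "bac_run U d k Uc out"
  shows "\<exists>S. bac_returns U d out S"
    "\<And>S. bac_returns U d out S \<Longrightarrow>
      S \<subseteq> U \<and> card S = k \<and> opt_div U d k / (6 * real k) \<le> diver d S"
proof -
  obtain R0 S0 where R0: "R0 \<in> bac_radii U d" "out R0 = Some S0"
    and good: "opt_div U d k / (6 * real k) \<le> diver d S0"
    using bac_run_succeeds[OF assms] by blast
  show "\<exists>S. bac_returns U d out S"
    using bac_returns_exists[where out = out, OF finite_bac_radii[of U d, OF asym_pseudometricD(1)[OF pm]] R0] .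
  fix S assume "bac_returns U d out S"
  then obtain R where R: "R \<in> bac_radii U d" "out R = Some S" and "diver d S0 \<le> diver d S"
    using R0 unfolding bac_returns_def by blast
  then show "S \<subseteq> U \<and> card S = k \<and> opt_div U d k / (6 * real k) \<le> diver d S"
    using bac_run_output(1,2)[OF pm k(1) run R] good by simp
qed

theorem theorem5p5:
  fixes U :: "'a set" and d :: "'a \<Rightarrow> 'a \<Rightarrow> real" and k n :: nat
  assumes "asym_pseudometric U d"
    and "card U = n"
    and "2 \<le> k" and "k \<le> n"
    and "opt_div U d k > 0"
  shows "(\<exists>Uc out. bac_run U d k Uc out) \<and>
    (\<forall>Uc out. bac_run U d k Uc out \<longrightarrow>
       (\<exists>S. bac_returns U d out S) \<and>
       (\<forall>S. bac_returns U d out S \<longrightarrow>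
          S \<subseteq> U \<and> card S = k \<and> diver d S \<ge> opt_div U d k / (6 * real k)))"
proof -
  have "U \<noteq> {}"
    using assms(2-4) by auto
  then have "\<exists>Uc out. bac_run U d k Uc out"
    by (rule bac_run_exists[OF assms(1)])
  moreover have "(\<exists>S. bac_returns U d out S) \<and> (\<forall>S. bac_returns U d out S \<longrightarrow>
      S \<subseteq> U \<and> card S = k \<and> diver d S \<ge> opt_div U d k / (6 * real k))"
    if "bac_run U d k Uc out" for Uc out
    using bac_run_correct[OF assms(1,3) _ assms(5) that] assms(2,4) by blast
  ultimately show ?thesis
    by blast
qed

end
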